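(* If $M$ is a term of $\ell\Lambda_\infty^{4S}$, $M\to_0 N$ and $M\leadsto L$, then there is a term $P$ of $\ell\Lambda_\infty^{4S}$ such that $N\leadsto P$ and $L\to_0 P$.
   Context: Preterms: possibly infinite trees generated by $M ::= x \mid MN \mid \lambda x.M \mid \lambda^{\downarrow}x.M \mid \lambda^{\uparrow}x.M \mid \downarrow M \mid \uparrow M$ ($\downarrow M$ inductive box, $\uparrow M$ coinductive box); substitution is capture-avoiding. Patterns: $x,\downarrow x,\uparrow x,\#x,\dagger x$; environments: finite sets of patterns, each variable in at most one; $\Theta,\Xi,\Psi,\Phi$ linear environments with marked versions $\#\Theta$ etc.; $\Upsilon,\Pi$ environments with only patterns $y$, $\downarrow y$; commas are disjoint unions. A term of $\ell\Lambda_\infty^{4S}$ is a preterm $M$ with $\Gamma\vdash M$ derivable for some $\Gamma$ by: (vl) $\#\Theta,\uparrow\Xi,\dagger\Psi,x\vdash x$; (vd) $\#\Theta,\uparrow\Xi,\dagger\Psi,\#x\vdash x$; (va) $\#\Theta,\uparrow\Xi,\dagger\Psi,\dagger x\vdash x$; (a) from $\Upsilon,\#\Theta,\uparrow\Xi,\dagger\Psi\vdash M$ and $\Pi,\#\Theta,\uparrow\Xi,\dagger\Psi\vdash N$ infer $\Upsilon,\Pi,\#\Theta,\uparrow\Xi,\dagger\Psi\vdash MN$; (ll) $\Gamma,x\vdash M$ gives $\Gamma\vdash\lambda x.M$; (li)$_1$ $\Gamma,\#x\vdash M$ gives $\Gamma\vdash\lambda^\downarrow x.M$; (li)$_2$ $\Gamma,\downarrow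 x\vdash M$ gives $\Gamma\vdash\lambda^\downarrow x.M$; (lc) $\Gamma,\uparrow x\vdash M$ gives $\Gamma\vdash\lambda^\uparrow x.M$; (mi) from $\Xi,\uparrow\Psi,\dagger\Phi\vdash M$ infer $\#\Theta,\downarrow\Xi,\uparrow\Psi,\dagger\Phi\vdash\downarrow M$; (mc) from $\dagger\Xi,\dagger\Psi\vdash M$ infer $\#\Theta,\uparrow\Xi,\dagger\Psi\vdash\uparrow M$; (mc) coinductive, others inductive (every infinite branch of a derivation contains infinitely many (mc)). Basic reduction: $(\lambda x.M)N\mapsto M[N/x]$, $(\lambda^\downarrow x.M)(\downarrow N)\mapsto M[N/x]$, $(\lambda^\uparrow x.M)(\uparrow N)\mapsto M[N/x]$. $M\to N$ iff $M=C[L]$, $N=C[P]$, $L\mapsto P$ for a one-hole context $C$; $M\to_0 N$ is the special case in which the hole of $C$ lies inside no coinductive box $\uparrow(\cdot)$ (it may lie inside inductive boxes). Infinitary reduction $\Rightarrow$ and $\leadsto$ are given by the mixed formal system: (coinductive rule) if $M\to^*N$ and $N\leadsto L$ then $M\Rightarrow L$; (inductive rules) $x\leadsto x$; if $M\leadsto N$ and $L\leadsto P$ then $ML\leadsto NP$; if $M\leadsto N$ then $\lambda x.M\leadsto\lambda x.N$, $\lambda^\downarrow x.M\leadsto\lambda^\downarrow x.N$, $\lambda^\uparrow x.M\leadsto\lambda^\uparrow x.N$ and $\downarrow M\leadsto\downarrow N$; if $M\Rightarrow N$ then $\uparrow M\leadsto\uparrow N$. A judgment holds iff it is the root of a possibly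 infinite derivation tree in which every infinite branch uses the coinductive rule infinitely often. *)

theory Defs
  imports Main "HOL-Library.BNF_Corec"
begin

text \<open>Preterms are possibly infinite trees; we use de Bruijn indices, so alpha-equivalent
  named preterms are identified and substitution is automatically capture-avoiding.
  LamI = inductive-box lambda, LamC = coinductive-box lambda,
  BoxI = inductive box, BoxC = coinductive box.\<close>

codatatype trm =
    Var nat
  | App trm trm
  | Lam trm
  | LamI trm
  | LamC trm
  | BoxI trm
  | BoxC trm

primcorec lift :: "nat \<Rightarrow> trm \<Rightarrow> trm" where
  "lift k M = (case M of
       Var n \<Rightarrow> Var (if n < k then n else Suc n)
     | App A B \<Rightarrow> App (lift k A) (lift k B)
     | Lam A \<Rightarrow> Lam (lift (Suc k) A)
     | LamI A \<Rightarrow> LamI (lift (Suc k) A)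
     | LamC A \<Rightarrow> LamC (lift (Suc k) A)
     | BoxI A \<Rightarrow> BoxI (lift k A)
     | BoxC A \<Rightarrow> BoxC (lift k A))"

text \<open>\<open>subst k N M\<close> = M[N/k]: index k is replaced by N, larger free indices are decremented.\<close>

corec subst :: "nat \<Rightarrow> trm \<Rightarrow> trm \<Rightarrow> trm" where
  "subst k N M = (case M of
       Var n \<Rightarrow> (if n = k then N else if n < k then Var n else Var (n - 1))
     | App A B \<Rightarrow> App (subst k N A) (subst k N B)
     | Lam A \<Rightarrow> Lam (subst (Suc k) (lift 0 N) A)
     | LamI A \<Rightarrow> LamI (subst (Suc k) (lift 0 N) A)
     | LamC A \<Rightarrow> LamC (subst (Suc k) (lift 0 N) A)
     | BoxI A \<Rightarrow> BoxI (subst k N A)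
     | BoxC A \<Rightarrow> BoxC (subst k N A))"

text \<open>Patterns: PLin = x, PDown = \<down>x, PUp = \<up>x, PHash = #x, PDag = \<dagger>x.
  An environment assigns to each de Bruijn index at most one pattern.\<close>

datatype pat = PLin | PDown | PUp | PHash | PDag

type_synonym env = "nat \<Rightarrow> pat option"

definition ext :: "pat \<Rightarrow> env \<Rightarrow> env" where
  "ext p \<Gamma> = (\<lambda>n. case n of 0 \<Rightarrow> Some p | Suc m \<Rightarrow> \<Gamma> m)"

definition side_ok :: "nat \<Rightarrow> env \<Rightarrow> bool" where
  "side_ok n \<Gamma> \<longleftrightarrow> (\<forall>m. m \<noteq> n \<longrightarrow> \<Gamma> m \<in> {None, Some PHash, Some PUp, Some PDag})"

text \<open>Splitting for rule (a): \<Upsilon>,\<Pi>,#\<Theta>,\<up>\<Xi>,\<dagger>\<Psi> into \<Upsilon>,#\<Theta>,\<up>\<Xi>,\<dagger>\<Psi> and \<Pi>,#\<Theta>,\<up>\<Xi>,\<dagger>\<Psi>.\<close>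
definition app_split :: "env \<Rightarrow> env \<Rightarrow> env \<Rightarrow> bool" where
  "app_split \<Gamma> \<Gamma>1 \<Gamma>2 \<longleftrightarrow> (\<forall>n. case \<Gamma> n of
       None \<Rightarrow> \<Gamma>1 n = None \<and> \<Gamma>2 n = None
     | Some p \<Rightarrow> (if p \<in> {PLin, PDown}
                  then (\<Gamma>1 n = Some p \<and> \<Gamma>2 n = None) \<or> (\<Gamma>1 n = None \<and> \<Gamma>2 n = Some p)
                  else \<Gamma>1 n = Some p \<and> \<Gamma>2 n = Some p))"

text \<open>Rule (mi): conclusion #\<Theta>,\<down>\<Xi>,\<up>\<Psi>,\<dagger>\<Phi>, premise \<Xi>,\<up>\<Psi>,\<dagger>\<Phi>.\<close>
definition mi_env :: "env \<Rightarrow> env \<Rightarrow> bool" where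
  "mi_env \<Gamma> \<Gamma>' \<longleftrightarrow> (\<forall>n. case \<Gamma> n of
       None \<Rightarrow> \<Gamma>' n = None
     | Some PLin \<Rightarrow> False
     | Some PDown \<Rightarrow> \<Gamma>' n = Some PLin
     | Some PUp \<Rightarrow> \<Gamma>' n = Some PUp
     | Some PDag \<Rightarrow> \<Gamma>' n = Some PDag
     | Some PHash \<Rightarrow> \<Gamma>' n = None)"

text \<open>Rule (mc): conclusion #\<Theta>,\<up>\<Xi>,\<dagger>\<Psi>, premise \<dagger>\<Xi>,\<dagger>\<Psi>.\<close>
definition mc_env :: "env \<Rightarrow> env \<Rightarrow> bool" where
  "mc_env \<Gamma> \<Gamma>' \<longleftrightarrow> (\<forall>n. case \<Gamma> n of
       None \<Rightarrow> \<Gamma>' n = None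
     | Some PLin \<Rightarrow> False
     | Some PDown \<Rightarrow> False
     | Some PUp \<Rightarrow> \<Gamma>' n = Some PDag
     | Some PDag \<Rightarrow> \<Gamma>' n = Some PDag
     | Some PHash \<Rightarrow> \<Gamma>' n = None)"

text \<open>Inductive part of the typing system; premises of the coinductive rule (mc) refer to X.\<close>
inductive ty_i :: "(env \<Rightarrow> trm \<Rightarrow> bool) \<Rightarrow> env \<Rightarrow> trm \<Rightarrow> bool" for X where
  vl: "\<Gamma> n = Some PLin \<Longrightarrow> side_ok n \<Gamma> \<Longrightarrow> ty_i X \<Gamma> (Var n)"
| vd: "\<Gamma> n = Some PHash \<Longrightarrow> side_ok n \<Gamma> \<Longrightarrow> ty_i X \<Gamma> (Var n)"
| va: "\<Gamma> n = Some PDag \<Longrightarrow> side_ok n \<Gamma> \<Longrightarrow> ty_i X \<Gamma> (Var n)"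
| a: "app_split \<Gamma> \<Gamma>1 \<Gamma>2 \<Longrightarrow> ty_i X \<Gamma>1 M \<Longrightarrow> ty_i X \<Gamma>2 N \<Longrightarrow> ty_i X \<Gamma> (App M N)"
| ll: "ty_i X (ext PLin \<Gamma>) M \<Longrightarrow> ty_i X \<Gamma> (Lam M)"
| li1: "ty_i X (ext PHash \<Gamma>) M \<Longrightarrow> ty_i X \<Gamma> (LamI M)"
| li2: "ty_i X (ext PDown \<Gamma>) M \<Longrightarrow> ty_i X \<Gamma> (LamI M)"
| lc: "ty_i X (ext PUp \<Gamma>) M \<Longrightarrow> ty_i X \<Gamma> (LamC M)"
| mi: "mi_env \<Gamma> \<Gamma>' \<Longrightarrow> ty_i X \<Gamma>' M \<Longrightarrow> ty_i X \<Gamma> (BoxI M)"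
| mc: "mc_env \<Gamma> \<Gamma>' \<Longrightarrow> X \<Gamma>' M \<Longrightarrow> ty_i X \<Gamma> (BoxC M)"

lemma ty_i_mono[mono]: "X \<le> Y \<Longrightarrow> ty_i X \<le> ty_i Y"
proof (intro le_funI le_boolI)
  fix \<Gamma> M assume XY: "X \<le> Y" and H: "ty_i X \<Gamma> M"
  from H show "ty_i Y \<Gamma> M"
    by (induction rule: ty_i.induct) (use XY in \<open>auto intro: ty_i.intros\<close>)
qed

text \<open>Mixed derivability: greatest fixed point over the coinductive rule (mc),
  least fixed point over all other rules.\<close>
coinductive ty :: "env \<Rightarrow> trm \<Rightarrow> bool" where
  "ty_i ty \<Gamma> M \<Longrightarrow> ty \<Gamma> M"

definition is_term :: "trm \<Rightarrow> bool" where
  "is_term M \<longleftrightarrow> (\<exists>\<Gamma>. finite (dom \<Gamma>) \<and> ty \<Gamma> M)"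

inductive basic :: "trm \<Rightarrow> trm \<Rightarrow> bool" where
  "basic (App (Lam M) N) (subst 0 N M)"
| "basic (App (LamI M) (BoxI N)) (subst 0 N M)"
| "basic (App (LamC M) (BoxC N)) (subst 0 N M)"

inductive step :: "trm \<Rightarrow> trm \<Rightarrow> bool" where
  "basic M N \<Longrightarrow> step M N"
| "step M M' \<Longrightarrow> step (App M N) (App M' N)"
| "step N N' \<Longrightarrow> step (App M N) (App M N')"
| "step M M' \<Longrightarrow> step (Lam M) (Lam M')"
| "step M M' \<Longrightarrow> step (LamI M) (LamI M')"
| "step M M' \<Longrightarrow> step (LamC M) (LamC M')"
| "step M M' \<Longrightarrow> step (BoxI M) (BoxI M')"
| "step M M' \<Longrightarrow> step (BoxC M) (BoxC M')"

text \<open>\<open>\<rightarrow>\<^sub>0\<close>: the hole is not inside any coinductive box.\<close>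
inductive step0 :: "trm \<Rightarrow> trm \<Rightarrow> bool" where
  "basic M N \<Longrightarrow> step0 M N"
| "step0 M M' \<Longrightarrow> step0 (App M N) (App M' N)"
| "step0 N N' \<Longrightarrow> step0 (App M N) (App M N')"
| "step0 M M' \<Longrightarrow> step0 (Lam M) (Lam M')"
| "step0 M M' \<Longrightarrow> step0 (LamI M) (LamI M')"
| "step0 M M' \<Longrightarrow> step0 (LamC M) (LamC M')"
| "step0 M M' \<Longrightarrow> step0 (BoxI M) (BoxI M')"

text \<open>Inductive rules for \<open>\<leadsto>\<close>, with premise of the \<up>-box rule referring to X (for \<Rightarrow>).\<close>
inductive ired :: "(trm \<Rightarrow> trm \<Rightarrow> bool) \<Rightarrow> trm \<Rightarrow> trm \<Rightarrow> bool" for X where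
  "ired X (Var x) (Var x)"
| "ired X M N \<Longrightarrow> ired X L P \<Longrightarrow> ired X (App M L) (App N P)"
| "ired X M N \<Longrightarrow> ired X (Lam M) (Lam N)"
| "ired X M N \<Longrightarrow> ired X (LamI M) (LamI N)"
| "ired X M N \<Longrightarrow> ired X (LamC M) (LamC N)"
| "ired X M N \<Longrightarrow> ired X (BoxI M) (BoxI N)"
| "X M N \<Longrightarrow> ired X (BoxC M) (BoxC N)"

lemma ired_mono[mono]: "X \<le> Y \<Longrightarrow> ired X \<le> ired Y"
proof (intro le_funI le_boolI)
  fix M N assume XY: "X \<le> Y" and H: "ired X M N"
  from H show "ired Y M N"
    by (induction rule: ired.induct) (use XY in \<open>auto intro: ired.intros\<close>)
qed

coinductive cored :: "trm \<Rightarrow> trm \<Rightarrow> bool" where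
  "step\<^sup>*\<^sup>* M N \<Longrightarrow> ired cored N L \<Longrightarrow> cored M L"

abbreviation ired_rel :: "trm \<Rightarrow> trm \<Rightarrow> bool" where
  "ired_rel \<equiv> ired cored"

end

theory Submission
  imports Defs
begin

text \<open>The diagram is closed by contracting, in \<open>L\<close>, the residual of the redex contracted in \<open>M\<close>;
  for congruence steps this is an induction on \<open>\<rightarrow>\<^sub>0\<close>. For a redex \<open>(\<lambda>x. A) B\<close> the reduct
  \<open>L\<close> is \<open>(\<lambda>x. A') B'\<close> with \<open>A \<leadsto> A'\<close>, and \<open>A[B/x] \<leadsto> A'[B'/x]\<close> holds as soon as \<open>B \<leadsto> B'\<close>
  wherever \<open>x\<close> occurs outside coinductive boxes and \<open>B \<Rightarrow> B'\<close> elsewhere. For a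
  \<open>\<lambda>\<^sup>\<up>\<close>-redex only \<open>B \<Rightarrow> B'\<close> is known, and typing is what guarantees that a \<open>\<up>x\<close>-variable
  occurs only inside coinductive boxes. That \<open>P\<close> is again a term follows from preservation of
  typing under \<open>\<leadsto>\<close> and subject reduction, the latter up to turning some \<open>\<down>x\<close> into \<open>#x\<close>.\<close>

lemma trm_eq_coinduct [consumes 1, case_names step]:
  assumes "R a b"
    and step: "\<And>a b. R a b \<Longrightarrow> a = b \<or> (\<exists>n. a = Var n \<and> b = Var n)
    \<or> (\<exists>a1 a2 b1 b2. a = App a1 a2 \<and> b = App b1 b2 \<and> (R a1 b1 \<or> a1 = b1) \<and> (R a2 b2 \<or> a2 = b2))
    \<or> (\<exists>a1 b1. a = Lam a1 \<and> b = Lam b1 \<and> (R a1 b1 \<or> a1 = b1))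
    \<or> (\<exists>a1 b1. a = LamI a1 \<and> b = LamI b1 \<and> (R a1 b1 \<or> a1 = b1))
    \<or> (\<exists>a1 b1. a = LamC a1 \<and> b = LamC b1 \<and> (R a1 b1 \<or> a1 = b1))
    \<or> (\<exists>a1 b1. a = BoxI a1 \<and> b = BoxI b1 \<and> (R a1 b1 \<or> a1 = b1))
    \<or> (\<exists>a1 b1. a = BoxC a1 \<and> b = BoxC b1 \<and> (R a1 b1 \<or> a1 = b1))"
  shows "a = b"
  using assms(1)
proof (coinduction arbitrary: a b rule: trm.coinduct_strong)
  case (Eq_trm a b)
  from step[OF this] show ?case
    by (elim disjE exE conjE) simp_all
qed

lemma lift_simps [simp]:
  "lift k (Var n) = Var (if n < k then n else Suc n)"
  "lift k (App A B) = App (lift k A) (lift k B)"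
  "lift k (Lam A) = Lam (lift (Suc k) A)"
  "lift k (LamI A) = LamI (lift (Suc k) A)"
  "lift k (LamC A) = LamC (lift (Suc k) A)"
  "lift k (BoxI A) = BoxI (lift k A)"
  "lift k (BoxC A) = BoxC (lift k A)"
  by (subst lift.code; simp)+

lemma subst_simps [simp]:
  "subst k N (Var n) = (if n = k then N else if n < k then Var n else Var (n - 1))"
  "subst k N (App A B) = App (subst k N A) (subst k N B)"
  "subst k N (Lam A) = Lam (subst (Suc k) (lift 0 N) A)"
  "subst k N (LamI A) = LamI (subst (Suc k) (lift 0 N) A)"
  "subst k N (LamC A) = LamC (subst (Suc k) (lift 0 N) A)"
  "subst k N (BoxI A) = BoxI (subst k N A)"
  "subst k N (BoxC A) = BoxC (subst k N A)"
  by (subst subst.code; simp)+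

lemma lift_lift: "j \<le> k \<Longrightarrow> lift j (lift k M) = lift (Suc k) (lift j M)"
  by (coinduction arbitrary: j k M) (case_tac M; auto)

lemma lift_subst: "j \<le> k \<Longrightarrow> lift k (subst j N A) = subst j (lift k N) (lift (Suc k) A)"
proof (coinduction arbitrary: j k N A rule: trm_eq_coinduct)
  case (step j k N A)
  then show ?case
    by (cases A) (simp_all add: lift_lift, (fastforce simp: lift_lift)+)
qed

lemma lift_subst_above: "j \<le> k \<Longrightarrow> lift j (subst k B N) = subst (Suc k) (lift j B) (lift j N)"
proof (coinduction arbitrary: j k B N rule: trm_eq_coinduct)
  case (step j k B N)
  then show ?case
    by (cases N) (simp_all add: lift_lift, (fastforce simp: lift_lift)+)
qed

lemma subst_lift: "subst j X (lift j M) = M"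
proof (coinduction arbitrary: j X M rule: trm_eq_coinduct)
  case (step j X M)
  then show ?case by (cases M) auto
qed

lemma subst_subst:
  "j \<le> k \<Longrightarrow> subst k B (subst j N A) = subst j (subst k B N) (subst (Suc k) (lift j B) A)"
proof (coinduction arbitrary: j k B N A rule: trm_eq_coinduct)
  case (step j k B N A)
  have under_binder: "\<exists>j' k' B' N' A'.
      subst (Suc k) (lift 0 B) (subst (Suc j) (lift 0 N) A) = subst k' B' (subst j' N' A') \<and>
      subst (Suc j) (lift 0 (subst k B N)) (subst (Suc (Suc k)) (lift 0 (lift j B)) A)
        = subst j' (subst k' B' N') (subst (Suc k') (lift j' B') A') \<and> j' \<le> k'" for A
    by (rule exI[of _ "Suc j"], rule exI[of _ "Suc k"], rule exI[of _ "lift 0 B"],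
        rule exI[of _ "lift 0 N"], rule exI[of _ A]) (simp add: step lift_lift lift_subst_above)
  show ?case
  proof (cases A)
    case (Var n)
    then show ?thesis using step by (intro disjI1) (auto simp: subst_lift)
  next
    case (Lam A')
    then show ?thesis using under_binder[of A'] by simp
  next
    case (LamI A')
    then show ?thesis using under_binder[of A'] by simp
  next
    case (LamC A')
    then show ?thesis using under_binder[of A'] by simp
  next
    case (App A1 A2)
    then show ?thesis using step by simp blast
  next
    case (BoxI A')
    then show ?thesis using step by simp blast
  next
    case (BoxC A')
    then show ?thesis using step by simp blast
  qed
qed

definition is_lambda :: "(trm \<Rightarrow> trm) \<Rightarrow> bool" where
  "is_lambda C \<longleftrightarrow> C = Lam \<or> C = LamI \<or> C = LamC"

lemma lift_lambda: "is_lambda C \<Longrightarrow> lift k (C M) = C (lift (Suc k) M)"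
  by (auto simp: is_lambda_def)

lemma subst_lambda: "is_lambda C \<Longrightarrow> subst k N (C M) = C (subst (Suc k) (lift 0 N) M)"
  by (auto simp: is_lambda_def)

lemma basic_lift: "basic M N \<Longrightarrow> basic (lift k M) (lift k N)"
  by (induction rule: basic.induct) (auto simp: lift_subst intro: basic.intros)

lemma basic_subst: "basic M N \<Longrightarrow> basic (subst k B M) (subst k B N)"
  by (induction rule: basic.induct) (auto simp: subst_subst intro: basic.intros)

lemma step_lift: "step M N \<Longrightarrow> step (lift k M) (lift k N)"
  by (induction arbitrary: k rule: step.induct) (auto intro: step.intros basic_lift)

lemma step_subst: "step M N \<Longrightarrow> step (subst k B M) (subst k B N)"
  by (induction arbitrary: k B rule: step.induct) (auto intro: step.intros basic_subst)

lemma step_lambda: "is_lambda C \<Longrightarrow> step M N \<Longrightarrow> step (C M) (C N)"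
  by (auto simp: is_lambda_def intro: step.intros)

lemma step_induct [consumes 1, case_names basic AppL AppR Lambda BoxI BoxC]:
  assumes "step M N"
    and "\<And>M N. basic M N \<Longrightarrow> P M N"
    and "\<And>M M' N. step M M' \<Longrightarrow> P M M' \<Longrightarrow> P (App M N) (App M' N)"
    and "\<And>M N N'. step N N' \<Longrightarrow> P N N' \<Longrightarrow> P (App M N) (App M N')"
    and "\<And>C M M'. is_lambda C \<Longrightarrow> step M M' \<Longrightarrow> P M M' \<Longrightarrow> P (C M) (C M')"
    and "\<And>M M'. step M M' \<Longrightarrow> P M M' \<Longrightarrow> P (BoxI M) (BoxI M')"
    and "\<And>M M'. step M M' \<Longrightarrow> P M M' \<Longrightarrow> P (BoxC M) (BoxC M')"
  shows "P M N"
  using assms(1) by induction (use assms(2-) is_lambda_def in blast)+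

lemma step0_induct [consumes 1, case_names basic AppL AppR Lambda BoxI]:
  assumes "step0 M N"
    and "\<And>M N. basic M N \<Longrightarrow> P M N"
    and "\<And>M M' N. step0 M M' \<Longrightarrow> P M M' \<Longrightarrow> P (App M N) (App M' N)"
    and "\<And>M N N'. step0 N N' \<Longrightarrow> P N N' \<Longrightarrow> P (App M N) (App M N')"
    and "\<And>C M M'. is_lambda C \<Longrightarrow> step0 M M' \<Longrightarrow> P M M' \<Longrightarrow> P (C M) (C M')"
    and "\<And>M M'. step0 M M' \<Longrightarrow> P M M' \<Longrightarrow> P (BoxI M) (BoxI M')"
  shows "P M N"
  using assms(1) by induction (use assms(2-) is_lambda_def in blast)+

lemma step0_lambda: "is_lambda C \<Longrightarrow> step0 M N \<Longrightarrow> step0 (C M) (C N)"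
  by (auto simp: is_lambda_def intro: step0.intros)

lemma step0_step: "step0 M N \<Longrightarrow> step M N"
  by (induction rule: step0.induct) (auto intro: step.intros)

lemma rtranclp_map: "(\<And>x y. r x y \<Longrightarrow> r (f x) (f y)) \<Longrightarrow> r\<^sup>*\<^sup>* a b \<Longrightarrow> r\<^sup>*\<^sup>* (f a) (f b)"
  by (erule rtranclp_induct) (auto intro: rtranclp.rtrancl_into_rtrancl)

lemma steps_App: "step\<^sup>*\<^sup>* M M' \<Longrightarrow> step\<^sup>*\<^sup>* N N' \<Longrightarrow> step\<^sup>*\<^sup>* (App M N) (App M' N')"
  using rtranclp_map[of step "\<lambda>x. App x N" M M'] rtranclp_map[of step "App M'" N N']
  by (meson rtranclp_trans step.intros(2,3))

lemma ired_induct [consumes 1, case_names Var App Lambda BoxI BoxC]: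
  assumes "ired X M N"
    and "\<And>x. P (Var x) (Var x)"
    and "\<And>M N L Q. ired X M N \<Longrightarrow> P M N \<Longrightarrow> ired X L Q \<Longrightarrow> P L Q \<Longrightarrow> P (App M L) (App N Q)"
    and "\<And>C M N. is_lambda C \<Longrightarrow> ired X M N \<Longrightarrow> P M N \<Longrightarrow> P (C M) (C N)"
    and "\<And>M N. ired X M N \<Longrightarrow> P M N \<Longrightarrow> P (BoxI M) (BoxI N)"
    and "\<And>M N. X M N \<Longrightarrow> P (BoxC M) (BoxC N)"
  shows "P M N"
  using assms(1) by induction (use assms(2-) is_lambda_def in blast)+

lemma ired_lambda: "is_lambda C \<Longrightarrow> ired X M N \<Longrightarrow> ired X (C M) (C N)"
  by (auto simp: is_lambda_def intro: ired.intros)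

lemma ired_lambdaE:
  assumes "ired X (C M) L" and "is_lambda C"
  obtains L' where "L = C L'" and "ired X M L'"
  using assms by (auto simp: is_lambda_def elim: ired.cases)

lemma ired_mono': "ired X M N \<Longrightarrow> (\<And>x y. X x y \<Longrightarrow> Y x y) \<Longrightarrow> ired Y M N"
  using ired_mono[of X Y] by blast

lemma ired_into_cored: "ired cored M N \<Longrightarrow> cored M N"
  by (rule cored.intros[OF rtranclp.rtrancl_refl])

lemma cored_lift: "cored M N \<Longrightarrow> cored (lift k M) (lift k N)"
proof (coinduction arbitrary: k M N)
  case (cored k M N)
  then obtain M' where "step\<^sup>*\<^sup>* M M'" and "ired cored M' N"
    by (cases rule: cored.cases) auto
  moreover from \<open>ired cored M' N\<close>
  have "ired (\<lambda>a b. (\<exists>k M N. a = lift k M \<and> b = lift k N \<and> cored M N) \<or> cored a b) (lift k M') (lift k N)"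
    by (induction arbitrary: k rule: ired_induct) (auto simp: lift_lambda intro: ired.intros ired_lambda)
  ultimately show ?case
    using rtranclp_map[of step "lift k"] step_lift by blast
qed

lemma ired_lift: "ired cored M N \<Longrightarrow> ired cored (lift k M) (lift k N)"
  by (induction arbitrary: k rule: ired_induct)
    (auto simp: lift_lambda intro: ired.intros ired_lambda cored_lift)

lemma cored_subst: "cored M N \<Longrightarrow> cored B B' \<Longrightarrow> cored (subst k B M) (subst k B' N)"
proof (coinduction arbitrary: k B B' M N)
  case (cored k B B' M N)
  let ?R = "\<lambda>a b. (\<exists>k B B' M N. a = subst k B M \<and> b = subst k B' N \<and> cored M N \<and> cored B B')
    \<or> cored a b"
  from cored(1) obtain M' where steps: "step\<^sup>*\<^sup>* M M'" and M': "ired cored M' N"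
    by (cases rule: cored.cases) auto
  have "\<exists>Z. step\<^sup>*\<^sup>* (subst k B M') Z \<and> ired ?R Z (subst k B' N)" if "cored B B'" for k B B'
    using M' that
  proof (induction arbitrary: k B B' rule: ired_induct)
    case (Var x)
    show ?case
    proof (cases "x = k")
      case True
      from Var obtain B1 where "step\<^sup>*\<^sup>* B B1" and "ired cored B1 B'"
        by (cases rule: cored.cases) auto
      with True show ?thesis by (auto intro: ired_mono')
    qed (auto intro: ired.intros)
  next
    case (App M N L Q)
    then obtain Z1 Z2 where "step\<^sup>*\<^sup>* (subst k B M) Z1" "ired ?R Z1 (subst k B' N)"
      and "step\<^sup>*\<^sup>* (subst k B L) Z2" "ired ?R Z2 (subst k B' Q)"
      by meson
    then show ?case by (auto intro!: exI[of _ "App Z1 Z2"] steps_App ired.intros)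
  next
    case (Lambda C M N)
    then obtain Z where "step\<^sup>*\<^sup>* (subst (Suc k) (lift 0 B) M) Z"
      and "ired ?R Z (subst (Suc k) (lift 0 B') N)"
      using cored_lift by meson
    moreover have "step\<^sup>*\<^sup>* (C (subst (Suc k) (lift 0 B) M)) (C Z)"
      using rtranclp_map[of step C] step_lambda Lambda(1) calculation(1) by blast
    ultimately show ?case
      using Lambda(1) by (auto simp: subst_lambda intro: ired_lambda)
  next
    case (BoxI M N)
    then obtain Z where "step\<^sup>*\<^sup>* (subst k B M) Z" and "ired ?R Z (subst k B' N)"
      by meson
    moreover have "step\<^sup>*\<^sup>* (BoxI (subst k B M)) (BoxI Z)"
      using rtranclp_map[of step BoxI] step.intros(7) calculation(1) by blast
    ultimately show ?case by (auto intro: ired.intros)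
  next
    case (BoxC M N)
    then have "ired ?R (BoxC (subst k B M)) (BoxC (subst k B' N))"
      by (blast intro: ired.intros)
    then show ?case by auto
  qed
  with cored(2) steps show ?case
    using rtranclp_map[of step "subst k B"] step_subst by (meson rtranclp_trans)
qed

text \<open>Occurrence of a variable at a position not inside a coinductive box, i.e.\ where
  \<open>\<rightarrow>\<^sub>0\<close> and \<open>\<leadsto>\<close> act inductively.\<close>

inductive occurs0 :: "nat \<Rightarrow> trm \<Rightarrow> bool" where
  "occurs0 k (Var k)"
| "occurs0 k M \<Longrightarrow> occurs0 k (App M N)"
| "occurs0 k N \<Longrightarrow> occurs0 k (App M N)"
| "is_lambda C \<Longrightarrow> occurs0 (Suc k) M \<Longrightarrow> occurs0 k (C M)"
| "occurs0 k M \<Longrightarrow> occurs0 k (BoxI M)"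

lemma ired_subst:
  assumes "ired cored A A'" and "cored B B'" and "occurs0 k A \<Longrightarrow> ired cored B B'"
  shows "ired cored (subst k B A) (subst k B' A')"
  using assms
proof (induction arbitrary: k B B' rule: ired_induct)
  case (Var x)
  then show ?case by (auto intro: ired.intros occurs0.intros)
next
  case (App M N L Q)
  have "ired cored (subst k B M) (subst k B' N)" and "ired cored (subst k B L) (subst k B' Q)"
    using App by (auto intro: App.IH occurs0.intros)
  then show ?case by (auto intro: ired.intros)
next
  case (Lambda C M N)
  have "ired cored (subst (Suc k) (lift 0 B) M) (subst (Suc k) (lift 0 B') N)"
    using Lambda by (intro Lambda.IH cored_lift ired_lift) (auto intro: occurs0.intros)
  with Lambda(1) show ?case by (simp add: subst_lambda ired_lambda)
next
  case (BoxI M N)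
  have "ired cored (subst k B M) (subst k B' N)"
    using BoxI by (auto intro: BoxI.IH occurs0.intros)
  then show ?case by (auto intro: ired.intros)
next
  case (BoxC M N)
  then show ?case by (auto intro: ired.intros cored_subst)
qed

definition split_pat :: "pat option \<Rightarrow> pat option \<Rightarrow> pat option \<Rightarrow> bool" where
  "split_pat c c1 c2 \<longleftrightarrow> (case c of
       None \<Rightarrow> c1 = None \<and> c2 = None
     | Some p \<Rightarrow> (if p \<in> {PLin, PDown} then (c1 = Some p \<and> c2 = None) \<or> (c1 = None \<and> c2 = Some p)
                  else c1 = Some p \<and> c2 = Some p))"

lemma app_split_iff: "app_split \<Gamma> \<Gamma>1 \<Gamma>2 \<longleftrightarrow> (\<forall>n. split_pat (\<Gamma> n) (\<Gamma>1 n) (\<Gamma>2 n))"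
  by (simp add: app_split_def split_pat_def)

lemma split_pat_simps:
  "split_pat None c1 c2 \<longleftrightarrow> c1 = None \<and> c2 = None"
  "split_pat (Some PLin) c1 c2 \<longleftrightarrow> (c1 = Some PLin \<and> c2 = None) \<or> (c1 = None \<and> c2 = Some PLin)"
  "split_pat (Some PDown) c1 c2 \<longleftrightarrow> (c1 = Some PDown \<and> c2 = None) \<or> (c1 = None \<and> c2 = Some PDown)"
  "split_pat (Some PHash) c1 c2 \<longleftrightarrow> c1 = Some PHash \<and> c2 = Some PHash"
  "split_pat (Some PUp) c1 c2 \<longleftrightarrow> c1 = Some PUp \<and> c2 = Some PUp"
  "split_pat (Some PDag) c1 c2 \<longleftrightarrow> c1 = Some PDag \<and> c2 = Some PDag"
  by (simp_all add: split_pat_def)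

lemma split_pat_commute: "split_pat c c1 c2 \<longleftrightarrow> split_pat c c2 c1"
  unfolding split_pat_def by (auto split: option.splits)

lemma app_split_commute: "app_split \<Gamma> \<Gamma>1 \<Gamma>2 \<longleftrightarrow> app_split \<Gamma> \<Gamma>2 \<Gamma>1"
  unfolding app_split_iff using split_pat_commute by blast

text \<open>The patterns that rules (vl), (vd), (va) allow besides the variable itself.\<close>

definition discardable :: "pat option \<Rightarrow> bool" where
  "discardable c \<longleftrightarrow> c \<in> {None, Some PHash, Some PUp, Some PDag}"

lemma side_ok_iff: "side_ok n \<Gamma> \<longleftrightarrow> (\<forall>m. m \<noteq> n \<longrightarrow> discardable (\<Gamma> m))"
  by (simp add: side_ok_def discardable_def)

definition box_i_pat :: "pat option \<Rightarrow> pat option" where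
  "box_i_pat c = (case c of Some PDown \<Rightarrow> Some PLin | Some PUp \<Rightarrow> Some PUp | Some PDag \<Rightarrow> Some PDag
     | _ \<Rightarrow> None)"

definition box_c_pat :: "pat option \<Rightarrow> pat option" where
  "box_c_pat c = (case c of Some PUp \<Rightarrow> Some PDag | Some PDag \<Rightarrow> Some PDag | _ \<Rightarrow> None)"

lemma mi_env_iff:
  "mi_env \<Gamma> \<Gamma>' \<longleftrightarrow> (\<forall>n. \<Gamma> n \<noteq> Some PLin) \<and> \<Gamma>' = (\<lambda>n. box_i_pat (\<Gamma> n))"
proof -
  have "(case c of None \<Rightarrow> c' = None | Some PLin \<Rightarrow> False | Some PDown \<Rightarrow> c' = Some PLin
      | Some PUp \<Rightarrow> c' = Some PUp | Some PDag \<Rightarrow> c' = Some PDag | Some PHash \<Rightarrow> c' = None)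
    \<longleftrightarrow> c \<noteq> Some PLin \<and> c' = box_i_pat c" for c c'
    by (cases c) (auto simp: box_i_pat_def split: pat.split)
  then show ?thesis unfolding mi_env_def fun_eq_iff by blast
qed

lemma mc_env_iff:
  "mc_env \<Gamma> \<Gamma>' \<longleftrightarrow> (\<forall>n. \<Gamma> n \<noteq> Some PLin \<and> \<Gamma> n \<noteq> Some PDown) \<and> \<Gamma>' = (\<lambda>n. box_c_pat (\<Gamma> n))"
proof -
  have "(case c of None \<Rightarrow> c' = None | Some PLin \<Rightarrow> False | Some PDown \<Rightarrow> False
      | Some PUp \<Rightarrow> c' = Some PDag | Some PDag \<Rightarrow> c' = Some PDag | Some PHash \<Rightarrow> c' = None)
    \<longleftrightarrow> c \<noteq> Some PLin \<and> c \<noteq> Some PDown \<and> c' = box_c_pat c" for c c'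
    by (cases c) (auto simp: box_c_pat_def split: pat.split)
  then show ?thesis unfolding mc_env_def fun_eq_iff by blast
qed

definition shift :: "nat \<Rightarrow> nat \<Rightarrow> nat" where
  "shift k n = (if n < k then n else Suc n)"

definition ins_at :: "nat \<Rightarrow> pat option \<Rightarrow> env \<Rightarrow> env" where
  "ins_at k c \<Gamma> = (\<lambda>n. if n < k then \<Gamma> n else if n = k then c else \<Gamma> (n - 1))"

definition del_at :: "nat \<Rightarrow> env \<Rightarrow> env" where
  "del_at k \<Gamma> = (\<lambda>n. if n < k then \<Gamma> n else \<Gamma> (Suc n))"

lemma ins_at_same [simp]: "ins_at k c \<Gamma> k = c"
  by (simp add: ins_at_def)

lemma ins_at_shift [simp]: "ins_at k c \<Gamma> (shift k n) = \<Gamma> n"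
  by (simp add: ins_at_def shift_def)

lemma shift_neq [simp]: "shift k n \<noteq> k"
  by (simp add: shift_def)

lemma shift_inj [simp]: "shift k n = shift k m \<longleftrightarrow> n = m"
  by (auto simp: shift_def)

lemma shift_cases: "n \<noteq> k \<Longrightarrow> \<exists>m. n = shift k m"
  by (rule exI[of _ "if n < k then n else n - 1"]) (auto simp: shift_def)

lemma ins_at_del_at: "ins_at k (\<Gamma> k) (del_at k \<Gamma>) = \<Gamma>"
  by (auto simp: ins_at_def del_at_def fun_eq_iff)

lemma del_at_ins_at [simp]: "del_at k (ins_at k c \<Gamma>) = \<Gamma>"
  by (auto simp: ins_at_def del_at_def fun_eq_iff)

lemma ins_at_eq_iff: "ins_at k c \<Gamma> = ins_at k c' \<Gamma>' \<longleftrightarrow> c = c' \<and> \<Gamma> = \<Gamma>'"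
  by (metis del_at_ins_at ins_at_same)

lemma all_ins_at: "(\<forall>n. P (ins_at k c \<Gamma> n) n) \<longleftrightarrow> P c k \<and> (\<forall>m. P (\<Gamma> m) (shift k m))"
  by (metis ins_at_same ins_at_shift shift_cases)

lemma ins_at_comp: "(\<lambda>n. f (ins_at k c \<Gamma> n)) = ins_at k (f c) (\<lambda>n. f (\<Gamma> n))"
  by (auto simp: ins_at_def fun_eq_iff)

lemma ext_eq_ins_at: "ext p \<Gamma> = ins_at 0 (Some p) \<Gamma>"
  by (auto simp: ext_def ins_at_def fun_eq_iff split: nat.splits)

lemma ext_ins_at: "ext p (ins_at k c \<Gamma>) = ins_at (Suc k) c (ext p \<Gamma>)"
  by (auto simp: ext_eq_ins_at ins_at_def fun_eq_iff)

lemma app_split_ins_at_iff: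
  "app_split (ins_at k c \<Gamma>) (ins_at k c1 \<Gamma>1) (ins_at k c2 \<Gamma>2) \<longleftrightarrow>
    split_pat c c1 c2 \<and> app_split \<Gamma> \<Gamma>1 \<Gamma>2"
  unfolding app_split_iff by (metis ins_at_same ins_at_shift shift_cases)

lemma app_split_ins_atE:
  assumes "app_split (ins_at k c \<Gamma>) \<Gamma>1 \<Gamma>2"
  obtains c1 c2 \<Gamma>1' \<Gamma>2' where "\<Gamma>1 = ins_at k c1 \<Gamma>1'" and "\<Gamma>2 = ins_at k c2 \<Gamma>2'"
    and "split_pat c c1 c2" and "app_split \<Gamma> \<Gamma>1' \<Gamma>2'"
  using assms by (metis ins_at_del_at app_split_ins_at_iff)

lemma mi_env_ins_at:
  "mi_env (ins_at k c \<Gamma>) \<Gamma>' \<longleftrightarrow> (\<exists>\<Gamma>''. \<Gamma>' = ins_at k (box_i_pat c) \<Gamma>'' \<and> mi_env \<Gamma> \<Gamma>'' \<and> c \<noteq> Some PLin)"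
  unfolding mi_env_iff ins_at_comp
  by (auto simp: ins_at_eq_iff all_ins_at[where P="\<lambda>x n. x \<noteq> Some PLin"])

lemma mc_env_ins_at:
  "mc_env (ins_at k c \<Gamma>) \<Gamma>' \<longleftrightarrow>
    (\<exists>\<Gamma>''. \<Gamma>' = ins_at k (box_c_pat c) \<Gamma>'' \<and> mc_env \<Gamma> \<Gamma>'' \<and> c \<noteq> Some PLin \<and> c \<noteq> Some PDown)"
  unfolding mc_env_iff ins_at_comp
  by (auto simp: ins_at_eq_iff all_ins_at[where P="\<lambda>x n. x \<noteq> Some PLin \<and> x \<noteq> Some PDown"])

lemma side_ok_ins_at_same: "side_ok k (ins_at k c \<Gamma>) \<longleftrightarrow> (\<forall>m. discardable (\<Gamma> m))"
  unfolding side_ok_iff by (metis ins_at_shift shift_cases shift_neq)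

lemma side_ok_ins_at_shift: "side_ok (shift k n) (ins_at k c \<Gamma>) \<longleftrightarrow> discardable c \<and> side_ok n \<Gamma>"
  unfolding side_ok_iff by (metis ins_at_same ins_at_shift shift_cases shift_inj shift_neq)

lemma lift_Var [simp]: "lift k (Var n) = Var (shift k n)"
  by (simp add: shift_def)

declare lift_simps(1) [simp del]

lemma subst_Var_shift: "subst k B (Var (shift k m)) = Var m"
  by (auto simp: shift_def)

section \<open>Typing\<close>

lemma ty_iff: "ty \<Gamma> M \<longleftrightarrow> ty_i ty \<Gamma> M"
  by (auto elim: ty.cases intro: ty.intros)

lemma ty_coinduct:
  assumes "R \<Gamma> M" and "\<And>\<Gamma> M. R \<Gamma> M \<Longrightarrow> ty_i (\<lambda>\<Gamma> M. R \<Gamma> M \<or> ty \<Gamma> M) \<Gamma> M"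
  shows "ty \<Gamma> M"
  using assms by (coinduction arbitrary: \<Gamma> M rule: ty.coinduct) auto

lemma ty_i_mono': "ty_i X \<Gamma> M \<Longrightarrow> (\<And>\<Gamma> M. X \<Gamma> M \<Longrightarrow> Y \<Gamma> M) \<Longrightarrow> ty_i Y \<Gamma> M"
  using ty_i_mono[of X Y] by blast

inductive_cases ty_i_VarE: "ty_i X \<Gamma> (Var n)"
inductive_cases ty_i_AppE: "ty_i X \<Gamma> (App M N)"
inductive_cases ty_i_LamE: "ty_i X \<Gamma> (Lam M)"
inductive_cases ty_i_LamIE: "ty_i X \<Gamma> (LamI M)"
inductive_cases ty_i_LamCE: "ty_i X \<Gamma> (LamC M)"
inductive_cases ty_i_BoxIE: "ty_i X \<Gamma> (BoxI M)"
inductive_cases ty_i_BoxCE: "ty_i X \<Gamma> (BoxC M)"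

lemma ty_i_Var_iff:
  "ty_i X \<Gamma> (Var n) \<longleftrightarrow> \<Gamma> n \<in> {Some PLin, Some PHash, Some PDag} \<and> side_ok n \<Gamma>"
  by (auto elim: ty_i_VarE intro: ty_i.intros)

definition binds :: "(trm \<Rightarrow> trm) \<Rightarrow> pat \<Rightarrow> bool" where
  "binds C p \<longleftrightarrow> (C = Lam \<and> p = PLin) \<or> (C = LamI \<and> (p = PHash \<or> p = PDown)) \<or> (C = LamC \<and> p = PUp)"

lemma binds_is_lambda: "binds C p \<Longrightarrow> is_lambda C"
  by (auto simp: binds_def is_lambda_def)

lemma ty_i_lambda: "binds C p \<Longrightarrow> ty_i X (ext p \<Gamma>) M \<Longrightarrow> ty_i X \<Gamma> (C M)"
  by (auto simp: binds_def intro: ty_i.intros)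

lemma ty_i_lambdaE:
  assumes "ty_i X \<Gamma> (C M)" and "is_lambda C"
  obtains p where "binds C p" and "ty_i X (ext p \<Gamma>) M"
  using assms by (auto simp: is_lambda_def binds_def elim: ty_i_LamE ty_i_LamIE ty_i_LamCE)

lemma ty_i_induct [consumes 1, case_names Var App Lambda BoxI BoxC]:
  assumes "ty_i X \<Gamma> M"
    and "\<And>\<Gamma> n. \<Gamma> n \<in> {Some PLin, Some PHash, Some PDag} \<Longrightarrow> side_ok n \<Gamma> \<Longrightarrow> P \<Gamma> (Var n)"
    and "\<And>\<Gamma> \<Gamma>1 \<Gamma>2 M N. app_split \<Gamma> \<Gamma>1 \<Gamma>2 \<Longrightarrow> ty_i X \<Gamma>1 M \<Longrightarrow> P \<Gamma>1 M \<Longrightarrow>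
      ty_i X \<Gamma>2 N \<Longrightarrow> P \<Gamma>2 N \<Longrightarrow> P \<Gamma> (App M N)"
    and "\<And>\<Gamma> C p M. binds C p \<Longrightarrow> ty_i X (ext p \<Gamma>) M \<Longrightarrow> P (ext p \<Gamma>) M \<Longrightarrow> P \<Gamma> (C M)"
    and "\<And>\<Gamma> \<Gamma>' M. mi_env \<Gamma> \<Gamma>' \<Longrightarrow> ty_i X \<Gamma>' M \<Longrightarrow> P \<Gamma>' M \<Longrightarrow> P \<Gamma> (BoxI M)"
    and "\<And>\<Gamma> \<Gamma>' M. mc_env \<Gamma> \<Gamma>' \<Longrightarrow> X \<Gamma>' M \<Longrightarrow> P \<Gamma> (BoxC M)"
  shows "P \<Gamma> M"
  using assms(1)
proof induction
  case (ll \<Gamma> M) then show ?case using assms(4)[of Lam PLin] by (simp add: binds_def)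
next
  case (li1 \<Gamma> M) then show ?case using assms(4)[of LamI PHash] by (simp add: binds_def)
next
  case (li2 \<Gamma> M) then show ?case using assms(4)[of LamI PDown] by (simp add: binds_def)
next
  case (lc \<Gamma> M) then show ?case using assms(4)[of LamC PUp] by (simp add: binds_def)
qed (use assms(2,3,5,6) in auto)

lemma ty_lambda: "binds C p \<Longrightarrow> ty (ext p \<Gamma>) M \<Longrightarrow> ty \<Gamma> (C M)"
  by (simp add: ty_iff ty_i_lambda)

lemma ty_App: "app_split \<Gamma> \<Gamma>1 \<Gamma>2 \<Longrightarrow> ty \<Gamma>1 M \<Longrightarrow> ty \<Gamma>2 N \<Longrightarrow> ty \<Gamma> (App M N)"
  by (auto simp: ty_iff intro: ty_i.a)

lemma ty_BoxI: "mi_env \<Gamma> \<Gamma>' \<Longrightarrow> ty \<Gamma>' M \<Longrightarrow> ty \<Gamma> (BoxI M)"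
  by (auto simp: ty_iff intro: ty_i.mi)

lemma ty_BoxC: "mc_env \<Gamma> \<Gamma>' \<Longrightarrow> ty \<Gamma>' M \<Longrightarrow> ty \<Gamma> (BoxC M)"
  by (auto simp: ty_iff intro: ty_i.mc)

definition weakens :: "pat option \<Rightarrow> pat option \<Rightarrow> bool" where
  "weakens c c' \<longleftrightarrow> c = c' \<or> (c = None \<and> c' \<in> {Some PHash, Some PUp, Some PDag})
     \<or> (c = Some PLin \<and> c' \<in> {Some PHash, Some PDag})
     \<or> (c \<in> {Some PDown, Some PUp, Some PHash} \<and> c' = Some PDag)"

definition weakens_env :: "env \<Rightarrow> env \<Rightarrow> bool" where
  "weakens_env \<Gamma> \<Gamma>' \<longleftrightarrow> (\<forall>n. weakens (\<Gamma> n) (\<Gamma>' n))"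

lemma weakens_split_pat:
  "split_pat c c1 c2 \<Longrightarrow> weakens c c' \<Longrightarrow>
    split_pat c' (if c' = c then c1 else c') (if c' = c then c2 else c') \<and>
    weakens c1 (if c' = c then c1 else c') \<and> weakens c2 (if c' = c then c2 else c')"
  unfolding split_pat_def weakens_def by (auto split: option.splits if_splits)

lemma weakens_env_app_split:
  assumes "app_split \<Gamma> \<Gamma>1 \<Gamma>2" and "weakens_env \<Gamma> \<Gamma>'"
  shows "\<exists>\<Gamma>1' \<Gamma>2'. app_split \<Gamma>' \<Gamma>1' \<Gamma>2' \<and> weakens_env \<Gamma>1 \<Gamma>1' \<and> weakens_env \<Gamma>2 \<Gamma>2'"
proof -
  let ?\<Gamma>1' = "\<lambda>n. if \<Gamma>' n = \<Gamma> n then \<Gamma>1 n else \<Gamma>' n"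
  let ?\<Gamma>2' = "\<lambda>n. if \<Gamma>' n = \<Gamma> n then \<Gamma>2 n else \<Gamma>' n"
  have "app_split \<Gamma>' ?\<Gamma>1' ?\<Gamma>2' \<and> weakens_env \<Gamma>1 ?\<Gamma>1' \<and> weakens_env \<Gamma>2 ?\<Gamma>2'"
    using assms weakens_split_pat unfolding app_split_iff weakens_env_def by blast
  then show ?thesis by blast
qed

lemma weakens_box_i_pat:
  "weakens c c' \<Longrightarrow> c \<noteq> Some PLin \<Longrightarrow> c' \<noteq> Some PLin \<and> weakens (box_i_pat c) (box_i_pat c')"
  unfolding weakens_def box_i_pat_def by (auto split: option.splits pat.splits)

lemma weakens_box_c_pat:
  "weakens c c' \<Longrightarrow> c \<noteq> Some PLin \<Longrightarrow> c \<noteq> Some PDown \<Longrightarrow>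
    c' \<noteq> Some PLin \<and> c' \<noteq> Some PDown \<and> weakens (box_c_pat c) (box_c_pat c')"
  unfolding weakens_def box_c_pat_def by (auto split: option.splits pat.splits)

lemma weakens_env_mi_env:
  "mi_env \<Gamma> \<Delta> \<Longrightarrow> weakens_env \<Gamma> \<Gamma>' \<Longrightarrow> \<exists>\<Delta>'. mi_env \<Gamma>' \<Delta>' \<and> weakens_env \<Delta> \<Delta>'"
  unfolding mi_env_iff weakens_env_def using weakens_box_i_pat by blast

lemma weakens_env_mc_env:
  "mc_env \<Gamma> \<Delta> \<Longrightarrow> weakens_env \<Gamma> \<Gamma>' \<Longrightarrow> \<exists>\<Delta>'. mc_env \<Gamma>' \<Delta>' \<and> weakens_env \<Delta> \<Delta>'"
  unfolding mc_env_iff weakens_env_def using weakens_box_c_pat by blast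

lemma weakens_env_ext: "weakens_env \<Gamma> \<Gamma>' \<Longrightarrow> weakens_env (ext p \<Gamma>) (ext p \<Gamma>')"
  unfolding weakens_env_def ext_def by (auto simp: weakens_def split: nat.splits)

lemma weakens_discardable: "weakens c c' \<Longrightarrow> discardable c \<Longrightarrow> discardable c'"
  unfolding weakens_def discardable_def by auto

lemma weakens_Var_pat:
  "weakens c c' \<Longrightarrow> c \<in> {Some PLin, Some PHash, Some PDag} \<Longrightarrow> c' \<in> {Some PLin, Some PHash, Some PDag}"
  unfolding weakens_def by auto

lemma weakens_env_Var:
  assumes "weakens_env \<Gamma> \<Gamma>'" and "ty_i X \<Gamma> (Var n)"
  shows "ty_i Y \<Gamma>' (Var n)"
proof -
  have pointwise: "weakens (\<Gamma> m) (\<Gamma>' m)" for m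
    using assms(1) by (simp add: weakens_env_def)
  from assms(2) have "\<Gamma> n \<in> {Some PLin, Some PHash, Some PDag}" and "side_ok n \<Gamma>"
    by (simp_all add: ty_i_Var_iff)
  then have "\<Gamma>' n \<in> {Some PLin, Some PHash, Some PDag}" and "side_ok n \<Gamma>'"
    unfolding side_ok_iff using pointwise weakens_Var_pat weakens_discardable by blast+
  then show ?thesis by (simp add: ty_i_Var_iff)
qed

lemma ty_weaken:
  assumes "ty \<Gamma> M" and "weakens_env \<Gamma> \<Gamma>'"
  shows "ty \<Gamma>' M"
proof -
  let ?R = "\<lambda>\<Gamma>' M. \<exists>\<Gamma>. ty \<Gamma> M \<and> weakens_env \<Gamma> \<Gamma>'"
  have step: "ty_i (\<lambda>\<Gamma> M. ?R \<Gamma> M \<or> ty \<Gamma> M) \<Gamma>' M"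
    if "ty_i ty \<Gamma> M" and "weakens_env \<Gamma> \<Gamma>'" for \<Gamma> \<Gamma>' M
    using that
  proof (induction arbitrary: \<Gamma>' rule: ty_i_induct)
    case (Var \<Gamma> n)
    then show ?case by (intro weakens_env_Var[OF Var.prems]) (simp add: ty_i_Var_iff)
  next
    case (App \<Gamma> \<Gamma>1 \<Gamma>2 M N)
    then obtain \<Gamma>1' \<Gamma>2' where "app_split \<Gamma>' \<Gamma>1' \<Gamma>2'" "weakens_env \<Gamma>1 \<Gamma>1'" "weakens_env \<Gamma>2 \<Gamma>2'"
      using weakens_env_app_split by blast
    then show ?case using App.IH by (blast intro: ty_i.a)
  next
    case (Lambda \<Gamma> C p M)
    then show ?case using weakens_env_ext by (blast intro: ty_i_lambda)
  next
    case (BoxI \<Gamma> \<Delta> M)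
    then obtain \<Delta>' where "mi_env \<Gamma>' \<Delta>'" "weakens_env \<Delta> \<Delta>'"
      using weakens_env_mi_env by blast
    then show ?case using BoxI.IH by (blast intro: ty_i.mi)
  next
    case (BoxC \<Gamma> \<Delta> M)
    then obtain \<Delta>' where "mc_env \<Gamma>' \<Delta>'" "weakens_env \<Delta> \<Delta>'"
      using weakens_env_mc_env by blast
    moreover have "?R \<Delta>' M" using BoxC.hyps(2) \<open>weakens_env \<Delta> \<Delta>'\<close> by blast
    ultimately show ?case by (blast intro: ty_i.mc)
  qed
  show ?thesis
  proof (rule ty_coinduct[of ?R])
    show "?R \<Gamma>' M" using assms by blast
  next
    fix \<Delta> N
    assume "?R \<Delta> N"
    then obtain \<Gamma>0 where "ty_i ty \<Gamma>0 N" and "weakens_env \<Gamma>0 \<Delta>" by (auto simp: ty_iff)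
    then show "ty_i (\<lambda>\<Gamma> M. ?R \<Gamma> M \<or> ty \<Gamma> M) \<Delta> N" by (rule step)
  qed
qed

lemma box_pat_None [simp]: "box_i_pat None = None" "box_c_pat None = None"
  by (simp_all add: box_i_pat_def box_c_pat_def)

lemma discardable_None [simp]: "discardable None"
  by (simp add: discardable_def)

lemma ty_lift:
  assumes "ty \<Gamma> M"
  shows "ty (ins_at k None \<Gamma>) (lift k M)"
proof -
  let ?R = "\<lambda>G M'. \<exists>\<Gamma> k M. G = ins_at k None \<Gamma> \<and> M' = lift k M \<and> ty \<Gamma> M"
  have step: "ty_i (\<lambda>G M. ?R G M \<or> ty G M) (ins_at k None \<Gamma>) (lift k M)" if "ty_i ty \<Gamma> M" for \<Gamma> k M
    using that
  proof (induction arbitrary: k rule: ty_i_induct)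
    case (Var \<Gamma> n)
    then show ?case by (simp add: ty_i_Var_iff side_ok_ins_at_shift)
  next
    case (App \<Gamma> \<Gamma>1 \<Gamma>2 M N)
    then have "app_split (ins_at k None \<Gamma>) (ins_at k None \<Gamma>1) (ins_at k None \<Gamma>2)"
      by (simp add: app_split_ins_at_iff split_pat_simps)
    then show ?case using App.IH by (auto intro: ty_i.a)
  next
    case (Lambda \<Gamma> C p M)
    then show ?case
      using Lambda.IH[of "Suc k"] by (auto simp: lift_lambda binds_is_lambda ext_ins_at intro: ty_i_lambda)
  next
    case (BoxI \<Gamma> \<Delta> M)
    then have "mi_env (ins_at k None \<Gamma>) (ins_at k None \<Delta>)"
      by (auto simp: mi_env_ins_at)
    then show ?case using BoxI.IH by (auto intro: ty_i.mi)
  next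
    case (BoxC \<Gamma> \<Delta> M)
    then have "mc_env (ins_at k None \<Gamma>) (ins_at k None \<Delta>)"
      by (auto simp: mc_env_ins_at)
    moreover have "?R (ins_at k None \<Delta>) (lift k M)" using BoxC.hyps(2) by blast
    ultimately show ?case by (auto intro: ty_i.mc)
  qed
  show ?thesis
  proof (rule ty_coinduct[of ?R])
    show "?R (ins_at k None \<Gamma>) (lift k M)" using assms by blast
  next
    fix G M'
    assume "?R G M'"
    then obtain \<Gamma> k M where G: "G = ins_at k None \<Gamma>" and M': "M' = lift k M" and "ty \<Gamma> M"
      by blast
    then have "ty_i ty \<Gamma> M" by (simp add: ty_iff)
    then show "ty_i (\<lambda>G M. ?R G M \<or> ty G M) G M'" unfolding G M' by (rule step)
  qed
qed

lemma ty_subst_unused: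
  assumes "ty (ins_at k None \<Gamma>) M"
  shows "ty \<Gamma> (subst k B M)"
proof -
  let ?R = "\<lambda>\<Gamma> M'. \<exists>k B M. M' = subst k B M \<and> ty (ins_at k None \<Gamma>) M"
  let ?S = "\<lambda>\<Gamma> M. ?R \<Gamma> M \<or> ty \<Gamma> M"
  have step: "ty_i ?S \<Gamma> (subst k B M)" if "ty_i ty G M" and "G = ins_at k None \<Gamma>" for G \<Gamma> k B M
    using that
  proof (induction arbitrary: \<Gamma> k B rule: ty_i_induct)
    case (Var G n)
    then have "n \<noteq> k" by auto
    then obtain m where "n = shift k m" using shift_cases by blast
    with Var show ?case
      by (simp del: subst_simps(1) add: subst_Var_shift ty_i_Var_iff side_ok_ins_at_shift)
  next
    case (App G G1 G2 M N)
    from App.hyps(1) App.prems obtain c1 c2 \<Gamma>1 \<Gamma>2 where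
      G1: "G1 = ins_at k c1 \<Gamma>1" and G2: "G2 = ins_at k c2 \<Gamma>2" and "split_pat None c1 c2"
      and split: "app_split \<Gamma> \<Gamma>1 \<Gamma>2"
      by (auto elim: app_split_ins_atE)
    then have "c1 = None" "c2 = None" by (simp_all add: split_pat_simps)
    then have "ty_i ?S \<Gamma>1 (subst k B M)" "ty_i ?S \<Gamma>2 (subst k B N)"
      using App.IH G1 G2 by simp_all
    with split show ?case by (simp add: ty_i.a)
  next
    case (Lambda G C p M)
    have "ext p G = ins_at (Suc k) None (ext p \<Gamma>)"
      using Lambda.prems by (simp add: ext_ins_at)
    then have "ty_i ?S (ext p \<Gamma>) (subst (Suc k) (lift 0 B) M)"
      by (rule Lambda.IH)
    with Lambda.hyps(1) show ?case
      by (simp add: subst_lambda binds_is_lambda ty_i_lambda)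
  next
    case (BoxI G \<Delta> M)
    then obtain \<Delta>' where "\<Delta> = ins_at k None \<Delta>'" and "mi_env \<Gamma> \<Delta>'"
      by (auto simp: mi_env_ins_at)
    then show ?case using BoxI.IH by (simp add: ty_i.mi)
  next
    case (BoxC G \<Delta> M)
    then obtain \<Delta>' where "\<Delta> = ins_at k None \<Delta>'" and "mc_env \<Gamma> \<Delta>'"
      by (auto simp: mc_env_ins_at)
    moreover have "?R \<Delta>' (subst k B M)" using BoxC.hyps(2) calculation(1) by blast
    ultimately show ?case by (simp add: ty_i.mc)
  qed
  show ?thesis
  proof (rule ty_coinduct[of ?R])
    show "?R \<Gamma> (subst k B M)" using assms by blast
  next
    fix \<Gamma> M'
    assume "?R \<Gamma> M'"
    then obtain k B M where M': "M' = subst k B M" and "ty (ins_at k None \<Gamma>) M"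
      by blast
    then have "ty_i ty (ins_at k None \<Gamma>) M" by (simp add: ty_iff)
    then show "ty_i ?S \<Gamma> M'" unfolding M' by (rule step) simp
  qed
qed

lemma split_pat_assoc:
  "split_pat c c1 d \<Longrightarrow> split_pat c1 a b \<Longrightarrow>
    split_pat (if a = None then d else a) a d \<and> split_pat c (if a = None then d else a) b"
  unfolding split_pat_def by (auto split: option.splits if_splits)

lemma app_split_assoc:
  assumes "app_split \<Gamma> \<Gamma>1 \<Delta>" and "app_split \<Gamma>1 \<Gamma>a \<Gamma>b"
  obtains \<Gamma>a' where "app_split \<Gamma>a' \<Gamma>a \<Delta>" and "app_split \<Gamma> \<Gamma>a' \<Gamma>b"
proof
  let ?\<Gamma>a' = "\<lambda>n. if \<Gamma>a n = None then \<Delta> n else \<Gamma>a n"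
  show "app_split ?\<Gamma>a' \<Gamma>a \<Delta>" "app_split \<Gamma> ?\<Gamma>a' \<Gamma>b"
    using assms split_pat_assoc unfolding app_split_iff by blast+
qed

lemma split_pat_discardable_eq: "split_pat c c1 d \<Longrightarrow> discardable c1 \<Longrightarrow> c = d"
  unfolding split_pat_def discardable_def by (auto split: option.splits if_splits)

lemma app_split_discardable_eq: "app_split \<Gamma> \<Gamma>1 \<Delta> \<Longrightarrow> \<forall>m. discardable (\<Gamma>1 m) \<Longrightarrow> \<Gamma> = \<Delta>"
  unfolding app_split_iff using split_pat_discardable_eq by blast

lemma ty_lift_discardable:
  assumes "ty \<Delta> B" and "discardable c"
  shows "ty (ins_at k c \<Delta>) (lift k B)"
proof (rule ty_weaken)
  show "ty (ins_at k None \<Delta>) (lift k B)" using assms(1) by (rule ty_lift)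
  show "weakens_env (ins_at k None \<Delta>) (ins_at k c \<Delta>)"
    using assms(2) by (auto simp: weakens_env_def weakens_def discardable_def ins_at_def)
qed

lemma app_split_ext:
  assumes "app_split \<Gamma> \<Gamma>1 \<Delta>"
  obtains c where "discardable c" and "app_split (ext p \<Gamma>) (ext p \<Gamma>1) (ins_at 0 c \<Delta>)"
proof -
  obtain c where "discardable c" and "split_pat (Some p) (Some p) c"
    by (cases p) (auto simp: split_pat_def discardable_def)
  with assms that show ?thesis by (simp add: ext_eq_ins_at app_split_ins_at_iff)
qed

lemma ty_subst_lin:
  assumes "ty_i ty G A" and "G = ins_at k (Some PLin) \<Gamma>1" and "ty \<Delta> B" and "app_split \<Gamma> \<Gamma>1 \<Delta>"
  shows "ty \<Gamma> (subst k B A)"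
  using assms
proof (induction arbitrary: \<Gamma>1 \<Gamma> \<Delta> B k rule: ty_i_induct)
  case (Var G n)
  show ?case
  proof (cases "n = k")
    case True
    then have "\<forall>m. discardable (\<Gamma>1 m)" using Var side_ok_ins_at_same by blast
    then have "\<Gamma> = \<Delta>" using Var.prems(3) app_split_discardable_eq by blast
    then show ?thesis using True Var.prems(2) by simp
  next
    case False
    then obtain m where "n = shift k m" using shift_cases by blast
    then show ?thesis using Var by (simp add: side_ok_ins_at_shift discardable_def)
  qed
next
  case (App G G1 G2 M N)
  from App.hyps(1) App.prems(1) obtain c1 c2 \<Gamma>a \<Gamma>b where
    G1: "G1 = ins_at k c1 \<Gamma>a" and G2: "G2 = ins_at k c2 \<Gamma>b" and "split_pat (Some PLin) c1 c2"
    and split: "app_split \<Gamma>1 \<Gamma>a \<Gamma>b"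
    by (auto elim: app_split_ins_atE)
  then consider "c1 = Some PLin" "c2 = None" | "c1 = None" "c2 = Some PLin"
    by (auto simp: split_pat_simps)
  then show ?case
  proof cases
    case 1
    obtain \<Gamma>a' where "app_split \<Gamma>a' \<Gamma>a \<Delta>" and split': "app_split \<Gamma> \<Gamma>a' \<Gamma>b"
      using app_split_assoc App.prems(3) split by blast
    then have "ty \<Gamma>a' (subst k B M)"
      using App.IH(1)[OF _ App.prems(2)] G1 1 by simp
    moreover have "ty \<Gamma>b (subst k B N)"
      using App.hyps(3) G2 1 by (intro ty_subst_unused) (simp add: ty_iff)
    ultimately show ?thesis using split' by (simp add: ty_App)
  next
    case 2
    have "app_split \<Gamma>1 \<Gamma>b \<Gamma>a" using split app_split_commute by blast
    then obtain \<Gamma>b' where "app_split \<Gamma>b' \<Gamma>b \<Delta>" and split': "app_split \<Gamma> \<Gamma>b' \<Gamma>a"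
      using app_split_assoc App.prems(3) by blast
    then have "ty \<Gamma>b' (subst k B N)"
      using App.IH(2)[OF _ App.prems(2)] G2 2 by simp
    moreover have "ty \<Gamma>a (subst k B M)"
      using App.hyps(2) G1 2 by (intro ty_subst_unused) (simp add: ty_iff)
    ultimately show ?thesis using split' app_split_commute by (simp add: ty_App)
  qed
next
  case (Lambda G C p M)
  obtain c where "discardable c" and split: "app_split (ext p \<Gamma>) (ext p \<Gamma>1) (ins_at 0 c \<Delta>)"
    using app_split_ext Lambda.prems(3) by blast
  have "ty (ext p \<Gamma>) (subst (Suc k) (lift 0 B) M)"
    using Lambda.IH[OF _ ty_lift_discardable[OF Lambda.prems(2) \<open>discardable c\<close>] split]
      Lambda.prems(1) by (simp add: ext_ins_at)
  then show ?case using Lambda.hyps(1) by (simp add: subst_lambda binds_is_lambda ty_lambda)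
next
  case (BoxI G G' M)
  then show ?case by (simp add: mi_env_ins_at)
next
  case (BoxC G G' M)
  then show ?case by (simp add: mc_env_ins_at)
qed

lemma split_pat_box_i_pat:
  "split_pat c c1 c2 \<Longrightarrow> c1 \<noteq> Some PLin \<Longrightarrow> c2 \<noteq> Some PLin \<Longrightarrow>
    c \<noteq> Some PLin \<and> split_pat (box_i_pat c) (box_i_pat c1) (box_i_pat c2)"
  unfolding split_pat_def box_i_pat_def by (auto split: option.splits pat.splits if_splits)

lemma app_split_mi_env:
  assumes "app_split \<Gamma> \<Gamma>1 \<Gamma>2" and "mi_env \<Gamma>1 \<Delta>1" and "mi_env \<Gamma>2 \<Delta>2"
  shows "mi_env \<Gamma> (\<lambda>n. box_i_pat (\<Gamma> n))" and "app_split (\<lambda>n. box_i_pat (\<Gamma> n)) \<Delta>1 \<Delta>2"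
  using assms split_pat_box_i_pat unfolding app_split_iff mi_env_iff by simp_all blast+

lemma discardable_box_i_pat: "discardable c \<Longrightarrow> discardable (box_i_pat c)"
  unfolding discardable_def box_i_pat_def by (auto split: option.splits pat.splits)

lemma ty_subst_down:
  assumes "ty_i ty G A" and "G = ins_at k (Some PDown) \<Gamma>1" and "ty \<Delta> B"
    and "app_split \<Gamma> \<Gamma>1 \<Gamma>2" and "mi_env \<Gamma>2 \<Delta>"
  shows "ty \<Gamma> (subst k B A)"
  using assms
proof (induction arbitrary: \<Gamma>1 \<Gamma> \<Gamma>2 \<Delta> B k rule: ty_i_induct)
  case (Var G n)
  then have "n \<noteq> k" by auto
  then obtain m where "n = shift k m" using shift_cases by blast
  then show ?case using Var by (simp add: side_ok_ins_at_shift discardable_def)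
next
  case (App G G1 G2 M N)
  from App.hyps(1) App.prems(1) obtain c1 c2 \<Gamma>a \<Gamma>b where
    G1: "G1 = ins_at k c1 \<Gamma>a" and G2: "G2 = ins_at k c2 \<Gamma>b" and "split_pat (Some PDown) c1 c2"
    and split: "app_split \<Gamma>1 \<Gamma>a \<Gamma>b"
    by (auto elim: app_split_ins_atE)
  then consider "c1 = Some PDown" "c2 = None" | "c1 = None" "c2 = Some PDown"
    by (auto simp: split_pat_simps)
  then show ?case
  proof cases
    case 1
    obtain \<Gamma>a' where "app_split \<Gamma>a' \<Gamma>a \<Gamma>2" and split': "app_split \<Gamma> \<Gamma>a' \<Gamma>b"
      using app_split_assoc App.prems(3) split by blast
    then have "ty \<Gamma>a' (subst k B M)"
      using App.IH(1)[OF _ App.prems(2) _ App.prems(4)] G1 1 by simp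
    moreover have "ty \<Gamma>b (subst k B N)"
      using App.hyps(3) G2 1 by (intro ty_subst_unused) (simp add: ty_iff)
    ultimately show ?thesis using split' by (simp add: ty_App)
  next
    case 2
    have "app_split \<Gamma>1 \<Gamma>b \<Gamma>a" using split app_split_commute by blast
    then obtain \<Gamma>b' where "app_split \<Gamma>b' \<Gamma>b \<Gamma>2" and split': "app_split \<Gamma> \<Gamma>b' \<Gamma>a"
      using app_split_assoc App.prems(3) by blast
    then have "ty \<Gamma>b' (subst k B N)"
      using App.IH(2)[OF _ App.prems(2) _ App.prems(4)] G2 2 by simp
    moreover have "ty \<Gamma>a (subst k B M)"
      using App.hyps(2) G1 2 by (intro ty_subst_unused) (simp add: ty_iff)
    ultimately show ?thesis using split' app_split_commute by (simp add: ty_App)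
  qed
next
  case (Lambda G C p M)
  obtain c where "discardable c" and split: "app_split (ext p \<Gamma>) (ext p \<Gamma>1) (ins_at 0 c \<Gamma>2)"
    using app_split_ext Lambda.prems(3) by blast
  have "mi_env (ins_at 0 c \<Gamma>2) (ins_at 0 (box_i_pat c) \<Delta>)"
    using Lambda.prems(4) \<open>discardable c\<close> by (auto simp: mi_env_ins_at discardable_def)
  moreover have "ty (ins_at 0 (box_i_pat c) \<Delta>) (lift 0 B)"
    using Lambda.prems(2) \<open>discardable c\<close> by (simp add: ty_lift_discardable discardable_box_i_pat)
  ultimately have "ty (ext p \<Gamma>) (subst (Suc k) (lift 0 B) M)"
    using Lambda.IH[OF _ _ split] Lambda.prems(1) by (simp add: ext_ins_at)
  then show ?case using Lambda.hyps(1) by (simp add: subst_lambda binds_is_lambda ty_lambda)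
next
  case (BoxI G G' M)
  then obtain G1 where G': "G' = ins_at k (Some PLin) G1" and "mi_env \<Gamma>1 G1"
    by (auto simp: mi_env_ins_at box_i_pat_def)
  then have "mi_env \<Gamma> (\<lambda>n. box_i_pat (\<Gamma> n))" and "app_split (\<lambda>n. box_i_pat (\<Gamma> n)) G1 \<Delta>"
    using app_split_mi_env BoxI.prems(3,4) by blast+
  moreover have "ty (\<lambda>n. box_i_pat (\<Gamma> n)) (subst k B M)"
    using ty_subst_lin[OF BoxI.hyps(2) G' BoxI.prems(2)] calculation(2) .
  ultimately show ?case by (simp add: ty_BoxI)
next
  case (BoxC G G' M)
  then show ?case by (simp add: mc_env_ins_at)
qed

definition union_pat :: "pat option \<Rightarrow> pat option \<Rightarrow> pat option \<Rightarrow> bool" where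
  "union_pat c1 d c \<longleftrightarrow> (d = None \<and> c = c1) \<or> (d \<noteq> None \<and> (c1 = None \<or> c1 = d) \<and> c = d)"

definition union_env :: "env \<Rightarrow> env \<Rightarrow> env \<Rightarrow> bool" where
  "union_env \<Gamma>1 \<Delta> \<Gamma> \<longleftrightarrow> (\<forall>n. union_pat (\<Gamma>1 n) (\<Delta> n) (\<Gamma> n))"

lemma union_pat_Some: "union_pat c1 d c \<Longrightarrow> c1 \<noteq> None \<Longrightarrow> c = c1"
  unfolding union_pat_def by auto

lemma union_pat_discardable: "union_pat c1 d c \<Longrightarrow> discardable c1 \<Longrightarrow> discardable d \<Longrightarrow> discardable c"
  unfolding union_pat_def by auto

lemma union_pat_weakens: "union_pat c1 d c \<Longrightarrow> discardable c1 \<Longrightarrow> discardable d \<Longrightarrow> weakens d c"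
  unfolding union_pat_def discardable_def weakens_def by auto

lemma union_pat_split_pat:
  "union_pat c1 d c \<Longrightarrow> split_pat c1 a b \<Longrightarrow> discardable d \<Longrightarrow>
    union_pat a d (if d = None then a else d) \<and> union_pat b d (if d = None then b else d) \<and>
    split_pat c (if d = None then a else d) (if d = None then b else d)"
  unfolding union_pat_def split_pat_def discardable_def by (auto split: option.splits if_splits)

lemma union_pat_box_i_pat:
  "union_pat c1 d c \<Longrightarrow> discardable d \<Longrightarrow> c1 \<noteq> Some PLin \<Longrightarrow>
    c \<noteq> Some PLin \<and> weakens (box_i_pat c1) (box_i_pat c)"
  unfolding union_pat_def discardable_def weakens_def box_i_pat_def
  by (auto split: option.splits pat.splits)

lemma union_pat_box_c_pat:
  "union_pat c1 d c \<Longrightarrow> discardable d \<Longrightarrow> c1 \<noteq> Some PLin \<Longrightarrow> c1 \<noteq> Some PDown \<Longrightarrow>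
    c \<noteq> Some PLin \<and> c \<noteq> Some PDown \<and> weakens (box_c_pat c1) (box_c_pat c)"
  unfolding union_pat_def discardable_def weakens_def box_c_pat_def
  by (auto split: option.splits pat.splits)

lemma union_env_app_split:
  assumes "union_env \<Gamma>1 \<Delta> \<Gamma>" and "app_split \<Gamma>1 \<Gamma>a \<Gamma>b" and "\<forall>n. discardable (\<Delta> n)"
  obtains \<Gamma>a' \<Gamma>b' where "union_env \<Gamma>a \<Delta> \<Gamma>a'" and "union_env \<Gamma>b \<Delta> \<Gamma>b'" and "app_split \<Gamma> \<Gamma>a' \<Gamma>b'"
proof
  let ?\<Gamma>a' = "\<lambda>n. if \<Delta> n = None then \<Gamma>a n else \<Delta> n"
  let ?\<Gamma>b' = "\<lambda>n. if \<Delta> n = None then \<Gamma>b n else \<Delta> n"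
  show "union_env \<Gamma>a \<Delta> ?\<Gamma>a'" "union_env \<Gamma>b \<Delta> ?\<Gamma>b'" "app_split \<Gamma> ?\<Gamma>a' ?\<Gamma>b'"
    using assms union_pat_split_pat unfolding union_env_def app_split_iff by blast+
qed

lemma union_env_ext: "union_env \<Gamma>1 \<Delta> \<Gamma> \<Longrightarrow> union_env (ext p \<Gamma>1) (ins_at 0 None \<Delta>) (ext p \<Gamma>)"
  by (auto simp: union_env_def union_pat_def ext_eq_ins_at ins_at_def)

lemma discardable_ins_at: "(\<forall>n. discardable (ins_at k c \<Delta> n)) \<longleftrightarrow> discardable c \<and> (\<forall>n. discardable (\<Delta> n))"
  by (metis ins_at_same ins_at_shift shift_cases)

lemma ty_subst_hash:
  assumes "ty_i ty G A" and "G = ins_at k (Some PHash) \<Gamma>1" and "ty \<Delta> B"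
    and "\<forall>n. discardable (\<Delta> n)" and "union_env \<Gamma>1 \<Delta> \<Gamma>"
  shows "ty \<Gamma> (subst k B A)"
  using assms
proof (induction arbitrary: \<Gamma>1 \<Gamma> \<Delta> B k rule: ty_i_induct)
  case (Var G n)
  have union: "union_pat (\<Gamma>1 m) (\<Delta> m) (\<Gamma> m)" for m
    using Var.prems(4) by (simp add: union_env_def)
  show ?case
  proof (cases "n = k")
    case True
    then have "\<forall>m. discardable (\<Gamma>1 m)" using Var side_ok_ins_at_same by blast
    then have "weakens_env \<Delta> \<Gamma>"
      unfolding weakens_env_def using union union_pat_weakens Var.prems(3) by blast
    then show ?thesis using True Var.prems(2) by (simp add: ty_weaken)
  next
    case False
    then obtain m where m: "n = shift k m" using shift_cases by blast
    with Var have "\<Gamma>1 m \<in> {Some PLin, Some PHash, Some PDag}" and "side_ok m \<Gamma>1"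
      by (simp_all add: side_ok_ins_at_shift)
    moreover from this have "\<Gamma> m = \<Gamma>1 m" using union union_pat_Some by blast
    moreover have "side_ok m \<Gamma>"
      using \<open>side_ok m \<Gamma>1\<close> Var.prems(3) union union_pat_discardable unfolding side_ok_iff by blast
    ultimately have "ty_i ty \<Gamma> (Var m)" by (simp add: ty_i_Var_iff)
    then show ?thesis using m by (simp del: subst_simps(1) add: subst_Var_shift ty_iff)
  qed
next
  case (App G G1 G2 M N)
  from App.hyps(1) App.prems(1) obtain c1 c2 \<Gamma>a \<Gamma>b where
    G1: "G1 = ins_at k c1 \<Gamma>a" and G2: "G2 = ins_at k c2 \<Gamma>b" and "split_pat (Some PHash) c1 c2"
    and split: "app_split \<Gamma>1 \<Gamma>a \<Gamma>b"
    by (auto elim: app_split_ins_atE)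
  then have "c1 = Some PHash" "c2 = Some PHash" by (simp_all add: split_pat_simps)
  obtain \<Gamma>a' \<Gamma>b' where "union_env \<Gamma>a \<Delta> \<Gamma>a'" "union_env \<Gamma>b \<Delta> \<Gamma>b'" and split': "app_split \<Gamma> \<Gamma>a' \<Gamma>b'"
    using union_env_app_split[OF App.prems(4) split App.prems(3)] .
  then have "ty \<Gamma>a' (subst k B M)" and "ty \<Gamma>b' (subst k B N)"
    using App.IH App.prems(2,3) G1 G2 \<open>c1 = Some PHash\<close> \<open>c2 = Some PHash\<close> by simp_all
  with split' show ?case by (simp add: ty_App)
next
  case (Lambda G C p M)
  have "ty (ext p \<Gamma>) (subst (Suc k) (lift 0 B) M)"
  proof (rule Lambda.IH)
    show "ext p G = ins_at (Suc k) (Some PHash) (ext p \<Gamma>1)"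
      using Lambda.prems(1) by (simp add: ext_ins_at)
    show "ty (ins_at 0 None \<Delta>) (lift 0 B)" using Lambda.prems(2) by (rule ty_lift)
    show "\<forall>n. discardable (ins_at 0 None \<Delta> n)" using Lambda.prems(3) by (simp add: discardable_ins_at)
    show "union_env (ext p \<Gamma>1) (ins_at 0 None \<Delta>) (ext p \<Gamma>)" using Lambda.prems(4) by (rule union_env_ext)
  qed
  then show ?case using Lambda.hyps(1) by (simp add: subst_lambda binds_is_lambda ty_lambda)
next
  case (BoxI G G' M)
  then obtain G1 where G': "G' = ins_at k None G1" and "mi_env \<Gamma>1 G1"
    by (auto simp: mi_env_ins_at box_i_pat_def)
  have "\<Gamma> n \<noteq> Some PLin \<and> weakens (box_i_pat (\<Gamma>1 n)) (box_i_pat (\<Gamma> n))" for n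
    using union_pat_box_i_pat BoxI.prems(3,4) \<open>mi_env \<Gamma>1 G1\<close>
    unfolding union_env_def mi_env_iff by blast
  then have "mi_env \<Gamma> (\<lambda>n. box_i_pat (\<Gamma> n))" and "weakens_env G1 (\<lambda>n. box_i_pat (\<Gamma> n))"
    using \<open>mi_env \<Gamma>1 G1\<close> by (auto simp: mi_env_iff weakens_env_def)
  moreover have "ty G1 (subst k B M)"
    using BoxI.hyps(2) G' by (intro ty_subst_unused) (simp add: ty_iff)
  ultimately have "ty \<Gamma> (BoxI (subst k B M))" by (blast intro: ty_BoxI ty_weaken)
  then show ?case by simp
next
  case (BoxC G G' M)
  then obtain G1 where G': "G' = ins_at k None G1" and "mc_env \<Gamma>1 G1"
    by (auto simp: mc_env_ins_at box_c_pat_def)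
  have "\<Gamma> n \<noteq> Some PLin \<and> \<Gamma> n \<noteq> Some PDown \<and> weakens (box_c_pat (\<Gamma>1 n)) (box_c_pat (\<Gamma> n))" for n
    using union_pat_box_c_pat BoxC.prems(3,4) \<open>mc_env \<Gamma>1 G1\<close>
    unfolding union_env_def mc_env_iff by blast
  then have "mc_env \<Gamma> (\<lambda>n. box_c_pat (\<Gamma> n))" and "weakens_env G1 (\<lambda>n. box_c_pat (\<Gamma> n))"
    using \<open>mc_env \<Gamma>1 G1\<close> by (auto simp: mc_env_iff weakens_env_def)
  moreover have "ty G1 (subst k B M)"
    using BoxC.hyps(2) G' by (intro ty_subst_unused) simp
  ultimately have "ty \<Gamma> (BoxC (subst k B M))" by (blast intro: ty_BoxC ty_weaken)
  then show ?case by simp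
qed

definition dag_within :: "env \<Rightarrow> env \<Rightarrow> bool" where
  "dag_within \<Delta> \<Gamma> \<longleftrightarrow> (\<forall>n. \<Delta> n = None \<or> (\<Delta> n = Some PDag \<and> \<Gamma> n = Some PDag))"

lemma dag_within_weakens_env:
  "dag_within \<Delta> \<Gamma> \<Longrightarrow> \<forall>n. discardable (\<Gamma> n) \<Longrightarrow> weakens_env \<Delta> \<Gamma>"
  unfolding dag_within_def weakens_env_def weakens_def discardable_def by (metis insert_iff)

lemma dag_within_app_split: "dag_within \<Delta> \<Gamma> \<Longrightarrow> app_split \<Gamma> \<Gamma>1 \<Gamma>2 \<Longrightarrow> dag_within \<Delta> \<Gamma>1 \<and> dag_within \<Delta> \<Gamma>2"
  unfolding dag_within_def app_split_iff by (metis split_pat_simps(6))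

lemma dag_within_ext: "dag_within \<Delta> \<Gamma> \<Longrightarrow> dag_within (ins_at 0 None \<Delta>) (ext p \<Gamma>)"
  unfolding dag_within_def by (simp add: ext_eq_ins_at ins_at_def)

lemma box_pat_Dag [simp]: "box_i_pat (Some PDag) = Some PDag" "box_c_pat (Some PDag) = Some PDag"
  by (simp_all add: box_i_pat_def box_c_pat_def)

lemma dag_within_mi_env: "dag_within \<Delta> \<Gamma> \<Longrightarrow> mi_env \<Gamma> \<Gamma>' \<Longrightarrow> dag_within \<Delta> \<Gamma>'"
  unfolding dag_within_def mi_env_iff by (metis box_pat_Dag(1))

lemma dag_within_mc_env: "dag_within \<Delta> \<Gamma> \<Longrightarrow> mc_env \<Gamma> \<Gamma>' \<Longrightarrow> dag_within \<Delta> \<Gamma>'"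
  unfolding dag_within_def mc_env_iff by (metis box_pat_Dag(2))

lemma ty_subst_dag:
  assumes "ty (ins_at k (Some PDag) \<Gamma>) A" and "ty \<Delta> B" and "dag_within \<Delta> \<Gamma>"
  shows "ty \<Gamma> (subst k B A)"
proof -
  let ?R = "\<lambda>\<Gamma> M. \<exists>k A B \<Delta>. M = subst k B A \<and> ty (ins_at k (Some PDag) \<Gamma>) A \<and> ty \<Delta> B \<and> dag_within \<Delta> \<Gamma>"
  let ?S = "\<lambda>\<Gamma> M. ?R \<Gamma> M \<or> ty \<Gamma> M"
  have step: "ty_i ?S \<Gamma> (subst k B A)"
    if "ty_i ty G A" and "G = ins_at k (Some PDag) \<Gamma>" and "ty \<Delta> B" and "dag_within \<Delta> \<Gamma>"
    for G \<Gamma> k A B \<Delta>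
    using that
  proof (induction arbitrary: \<Gamma> k B \<Delta> rule: ty_i_induct)
    case (Var G n)
    show ?case
    proof (cases "n = k")
      case True
      then have "\<forall>m. discardable (\<Gamma> m)" using Var side_ok_ins_at_same by blast
      then have "ty \<Gamma> B" using Var.prems(2,3) dag_within_weakens_env ty_weaken by blast
      then show ?thesis using True by (auto simp: ty_iff intro: ty_i_mono')
    next
      case False
      then obtain m where "n = shift k m" using shift_cases by blast
      with Var show ?thesis
        by (simp del: subst_simps(1) add: subst_Var_shift ty_i_Var_iff side_ok_ins_at_shift)
    qed
  next
    case (App G G1 G2 M N)
    from App.hyps(1) App.prems(1) obtain c1 c2 \<Gamma>1 \<Gamma>2 where
      "G1 = ins_at k c1 \<Gamma>1" and "G2 = ins_at k c2 \<Gamma>2" and "split_pat (Some PDag) c1 c2"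
      and split: "app_split \<Gamma> \<Gamma>1 \<Gamma>2"
      by (auto elim: app_split_ins_atE)
    moreover have "dag_within \<Delta> \<Gamma>1" and "dag_within \<Delta> \<Gamma>2"
      using dag_within_app_split[OF App.prems(3) split] by simp_all
    ultimately have "ty_i ?S \<Gamma>1 (subst k B M)" and "ty_i ?S \<Gamma>2 (subst k B N)"
      using App.IH App.prems(2) by (simp_all add: split_pat_simps)
    with split show ?case by (simp add: ty_i.a)
  next
    case (Lambda G C p M)
    have "ty_i ?S (ext p \<Gamma>) (subst (Suc k) (lift 0 B) M)"
    proof (rule Lambda.IH)
      show "ext p G = ins_at (Suc k) (Some PDag) (ext p \<Gamma>)"
        using Lambda.prems(1) by (simp add: ext_ins_at)
      show "ty (ins_at 0 None \<Delta>) (lift 0 B)" using Lambda.prems(2) by (rule ty_lift)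
      show "dag_within (ins_at 0 None \<Delta>) (ext p \<Gamma>)" using Lambda.prems(3) by (rule dag_within_ext)
    qed
    with Lambda.hyps(1) show ?case by (simp add: subst_lambda binds_is_lambda ty_i_lambda)
  next
    case (BoxI G G' M)
    then obtain G1 where "G' = ins_at k (Some PDag) G1" and "mi_env \<Gamma> G1"
      by (auto simp: mi_env_ins_at box_i_pat_def)
    moreover from this have "ty_i ?S G1 (subst k B M)"
      using BoxI.IH BoxI.prems(2,3) dag_within_mi_env by blast
    ultimately show ?case by (simp add: ty_i.mi)
  next
    case (BoxC G G' M)
    then obtain G1 where "G' = ins_at k (Some PDag) G1" and "mc_env \<Gamma> G1"
      by (auto simp: mc_env_ins_at box_c_pat_def)
    moreover from this have "?R G1 (subst k B M)"
      using BoxC.hyps(2) BoxC.prems(2,3) dag_within_mc_env by blast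
    ultimately show ?case by (simp add: ty_i.mc)
  qed
  show ?thesis
  proof (rule ty_coinduct[of ?R])
    show "?R \<Gamma> (subst k B A)" using assms by blast
  next
    fix \<Gamma> M
    assume "?R \<Gamma> M"
    then obtain k A B \<Delta> where M: "M = subst k B A" and "ty (ins_at k (Some PDag) \<Gamma>) A"
      and "ty \<Delta> B" and "dag_within \<Delta> \<Gamma>"
      by blast
    then show "ty_i ?S \<Gamma> M" unfolding M by (intro step) (simp_all add: ty_iff)
  qed
qed

lemma box_c_pat_discardable: "discardable (box_c_pat c)"
  unfolding discardable_def box_c_pat_def by (auto split: option.splits pat.splits)

lemma split_pat_box_c_pat: "split_pat c c1 c2 \<Longrightarrow> box_c_pat c1 = box_c_pat c \<and> box_c_pat c2 = box_c_pat c"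
  unfolding split_pat_def box_c_pat_def by (auto split: option.splits pat.splits if_splits)

lemma box_c_pat_box_i_pat: "box_c_pat (box_i_pat c) = box_c_pat c"
  unfolding box_i_pat_def box_c_pat_def by (auto split: option.splits pat.splits)

lemma ty_subst_up:
  assumes "ty_i ty G A" and "G = ins_at k (Some PUp) \<Gamma>" and "ty (\<lambda>n. box_c_pat (\<Gamma> n)) B"
  shows "ty \<Gamma> (subst k B A)"
  using assms
proof (induction arbitrary: \<Gamma> B k rule: ty_i_induct)
  case (Var G n)
  then have "n \<noteq> k" by auto
  then obtain m where "n = shift k m" using shift_cases by blast
  with Var show ?case
    by (simp del: subst_simps(1) add: subst_Var_shift ty_i_Var_iff side_ok_ins_at_shift ty_iff discardable_def)
next
  case (App G G1 G2 M N)
  from App.hyps(1) App.prems(1) obtain c1 c2 \<Gamma>1 \<Gamma>2 where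
    "G1 = ins_at k c1 \<Gamma>1" and "G2 = ins_at k c2 \<Gamma>2" and "split_pat (Some PUp) c1 c2"
    and split: "app_split \<Gamma> \<Gamma>1 \<Gamma>2"
    by (auto elim: app_split_ins_atE)
  moreover have "(\<lambda>n. box_c_pat (\<Gamma>1 n)) = (\<lambda>n. box_c_pat (\<Gamma> n))"
    and "(\<lambda>n. box_c_pat (\<Gamma>2 n)) = (\<lambda>n. box_c_pat (\<Gamma> n))"
    using split split_pat_box_c_pat unfolding app_split_iff fun_eq_iff by blast+
  ultimately have "ty \<Gamma>1 (subst k B M)" and "ty \<Gamma>2 (subst k B N)"
    using App.IH App.prems(2) by (simp_all add: split_pat_simps)
  with split show ?case by (simp add: ty_App)
next
  case (Lambda G C p M)
  have "ty (ext p \<Gamma>) (subst (Suc k) (lift 0 B) M)"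
  proof (rule Lambda.IH)
    show "ext p G = ins_at (Suc k) (Some PUp) (ext p \<Gamma>)"
      using Lambda.prems(1) by (simp add: ext_ins_at)
    show "ty (\<lambda>n. box_c_pat (ext p \<Gamma> n)) (lift 0 B)"
      unfolding ext_eq_ins_at ins_at_comp
      using Lambda.prems(2) box_c_pat_discardable by (rule ty_lift_discardable)
  qed
  then show ?case using Lambda.hyps(1) by (simp add: subst_lambda binds_is_lambda ty_lambda)
next
  case (BoxI G G' M)
  then obtain G1 where "G' = ins_at k (Some PUp) G1" and "mi_env \<Gamma> G1"
    by (auto simp: mi_env_ins_at box_i_pat_def)
  moreover from this have "(\<lambda>n. box_c_pat (G1 n)) = (\<lambda>n. box_c_pat (\<Gamma> n))"
    by (simp add: mi_env_iff box_c_pat_box_i_pat)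
  ultimately have "ty G1 (subst k B M)" using BoxI.IH BoxI.prems(2) by simp
  with \<open>mi_env \<Gamma> G1\<close> show ?case by (simp add: ty_BoxI)
next
  case (BoxC G G' M)
  then obtain G1 where G': "G' = ins_at k (Some PDag) G1" and "mc_env \<Gamma> G1"
    by (auto simp: mc_env_ins_at box_c_pat_def)
  then have "G1 = (\<lambda>n. box_c_pat (\<Gamma> n))" by (simp add: mc_env_iff)
  then have "dag_within (\<lambda>n. box_c_pat (\<Gamma> n)) G1"
    by (simp add: dag_within_def box_c_pat_def split: option.splits pat.splits)
  then have "ty G1 (subst k B M)"
    using ty_subst_dag BoxC.hyps(2) BoxC.prems(2) G' by blast
  with \<open>mc_env \<Gamma> G1\<close> show ?case by (simp add: ty_BoxC)
qed

section \<open>Subject reduction\<close>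

text \<open>Contracting \<open>(\<lambda>\<^sup>\<down>x. M) (\<down>N)\<close> with \<open>x\<close> typed \<open>#x\<close> duplicates \<open>N\<close>, so its linear variables,
  which are \<open>\<down>\<close>-variables of the redex, become \<open>#\<close>-variables: typing is preserved only up to
  turning some \<open>\<down>\<close> into \<open>#\<close>.\<close>

definition down_to_hash :: "pat option \<Rightarrow> pat option \<Rightarrow> bool" where
  "down_to_hash c c' \<longleftrightarrow> c' = c \<or> (c = Some PDown \<and> c' = Some PHash)"

definition down_to_hash_env :: "env \<Rightarrow> env \<Rightarrow> bool" where
  "down_to_hash_env \<Gamma> \<Gamma>' \<longleftrightarrow> (\<forall>n. down_to_hash (\<Gamma> n) (\<Gamma>' n))"

lemma down_to_hash_env_refl [simp]: "down_to_hash_env \<Gamma> \<Gamma>"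
  by (simp add: down_to_hash_env_def down_to_hash_def)

lemma down_to_hash_env_dom: "down_to_hash_env \<Gamma> \<Gamma>' \<Longrightarrow> dom \<Gamma>' = dom \<Gamma>"
  unfolding down_to_hash_env_def down_to_hash_def dom_def by (metis option.distinct(1))

lemma down_to_hash_env_no_Down: "\<forall>n. \<Gamma> n \<noteq> Some PDown \<Longrightarrow> down_to_hash_env \<Gamma> \<Gamma>' \<Longrightarrow> \<Gamma>' = \<Gamma>"
  unfolding down_to_hash_env_def down_to_hash_def by auto

definition hash_of_lin :: "pat option \<Rightarrow> pat option" where
  "hash_of_lin c = (if c = Some PLin then Some PHash else c)"

lemma split_pat_hash_argument:
  "split_pat c c1 c2 \<Longrightarrow> c2 \<noteq> Some PLin \<Longrightarrow>
    discardable (hash_of_lin (box_i_pat c2)) \<and> weakens (box_i_pat c2) (hash_of_lin (box_i_pat c2)) \<and>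
    union_pat c1 (hash_of_lin (box_i_pat c2))
      (if hash_of_lin (box_i_pat c2) = None then c1 else hash_of_lin (box_i_pat c2)) \<and>
    down_to_hash c (if hash_of_lin (box_i_pat c2) = None then c1 else hash_of_lin (box_i_pat c2))"
  unfolding split_pat_def discardable_def weakens_def union_pat_def down_to_hash_def hash_of_lin_def
    box_i_pat_def
  by (auto split: option.splits pat.splits if_splits)

lemma split_pat_box_c_argument:
  "split_pat c c1 c2 \<Longrightarrow> c2 \<noteq> Some PLin \<Longrightarrow> c2 \<noteq> Some PDown \<Longrightarrow> c1 = c \<and> box_c_pat c2 = box_c_pat c"
  unfolding split_pat_def box_c_pat_def by (auto split: option.splits pat.splits if_splits)

lemma subject_reduction_basic:
  assumes "basic M N" and "ty \<Gamma> M"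
  shows "\<exists>\<Gamma>'. down_to_hash_env \<Gamma> \<Gamma>' \<and> ty \<Gamma>' N"
  using assms
proof (induction rule: basic.induct)
  case (1 A B)
  then obtain \<Gamma>1 \<Gamma>2 where split: "app_split \<Gamma> \<Gamma>1 \<Gamma>2" and "ty_i ty \<Gamma>1 (Lam A)" and "ty \<Gamma>2 B"
    by (auto simp: ty_iff elim: ty_i_AppE)
  then have "ty_i ty (ins_at 0 (Some PLin) \<Gamma>1) A"
    by (auto simp: ext_eq_ins_at elim: ty_i_LamE)
  then have "ty \<Gamma> (subst 0 B A)" using \<open>ty \<Gamma>2 B\<close> split by (rule ty_subst_lin[OF _ refl])
  then show ?case using down_to_hash_env_refl by blast
next
  case (2 A B)
  then obtain \<Gamma>1 \<Gamma>2 where split: "app_split \<Gamma> \<Gamma>1 \<Gamma>2" and "ty_i ty \<Gamma>1 (LamI A)"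
    and "ty_i ty \<Gamma>2 (BoxI B)"
    by (auto simp: ty_iff elim: ty_i_AppE)
  then obtain \<Delta> where mi: "mi_env \<Gamma>2 \<Delta>" and B: "ty \<Delta> B"
    by (auto simp: ty_iff elim: ty_i_BoxIE)
  from \<open>ty_i ty \<Gamma>1 (LamI A)\<close> consider "ty_i ty (ins_at 0 (Some PDown) \<Gamma>1) A"
    | "ty_i ty (ins_at 0 (Some PHash) \<Gamma>1) A"
    by (auto simp: ext_eq_ins_at elim: ty_i_LamIE)
  then show ?case
  proof cases
    case 1
    then have "ty \<Gamma> (subst 0 B A)" using B split mi by (rule ty_subst_down[OF _ refl])
    then show ?thesis using down_to_hash_env_refl by blast
  next
    case 2
    define \<Delta>' where "\<Delta>' = (\<lambda>n. hash_of_lin (\<Delta> n))"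
    define \<Gamma>' where "\<Gamma>' = (\<lambda>n. if \<Delta>' n = None then \<Gamma>1 n else \<Delta>' n)"
    have pointwise: "discardable (\<Delta>' n) \<and> weakens (\<Delta> n) (\<Delta>' n) \<and> union_pat (\<Gamma>1 n) (\<Delta>' n) (\<Gamma>' n)
      \<and> down_to_hash (\<Gamma> n) (\<Gamma>' n)" for n
    proof -
      have "split_pat (\<Gamma> n) (\<Gamma>1 n) (\<Gamma>2 n)" using split by (simp add: app_split_iff)
      moreover have "\<Gamma>2 n \<noteq> Some PLin" and "\<Delta> n = box_i_pat (\<Gamma>2 n)" using mi by (auto simp: mi_env_iff)
      ultimately show ?thesis unfolding \<Delta>'_def \<Gamma>'_def using split_pat_hash_argument by presburger
    qed
    have "ty \<Delta>' B" using B pointwise by (auto simp: weakens_env_def intro: ty_weaken)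
    with 2 have "ty \<Gamma>' (subst 0 B A)"
      using pointwise by (auto simp: union_env_def intro: ty_subst_hash)
    moreover have "down_to_hash_env \<Gamma> \<Gamma>'" using pointwise by (simp add: down_to_hash_env_def)
    ultimately show ?thesis by blast
  qed
next
  case (3 A B)
  then obtain \<Gamma>1 \<Gamma>2 where split: "app_split \<Gamma> \<Gamma>1 \<Gamma>2" and "ty_i ty \<Gamma>1 (LamC A)"
    and "ty_i ty \<Gamma>2 (BoxC B)"
    by (auto simp: ty_iff elim: ty_i_AppE)
  then obtain \<Delta> where mc: "mc_env \<Gamma>2 \<Delta>" and B: "ty \<Delta> B"
    by (auto elim: ty_i_BoxCE)
  have "\<Gamma>1 n = \<Gamma> n \<and> \<Delta> n = box_c_pat (\<Gamma> n)" for n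
  proof -
    have "split_pat (\<Gamma> n) (\<Gamma>1 n) (\<Gamma>2 n)" using split by (simp add: app_split_iff)
    moreover have "\<Gamma>2 n \<noteq> Some PLin" "\<Gamma>2 n \<noteq> Some PDown" "\<Delta> n = box_c_pat (\<Gamma>2 n)"
      using mc by (auto simp: mc_env_iff)
    ultimately show ?thesis using split_pat_box_c_argument by metis
  qed
  then have "\<Gamma>1 = \<Gamma>" and "\<Delta> = (\<lambda>n. box_c_pat (\<Gamma> n))" by auto
  with \<open>ty_i ty \<Gamma>1 (LamC A)\<close> have "ty_i ty (ins_at 0 (Some PUp) \<Gamma>) A"
    by (auto simp: ext_eq_ins_at elim: ty_i_LamCE)
  with B \<open>\<Delta> = _\<close> have "ty \<Gamma> (subst 0 B A)" by (simp add: ty_subst_up)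
  then show ?case using down_to_hash_env_refl by blast
qed

lemma split_pat_down_to_hash:
  "split_pat c c1 c2 \<Longrightarrow> down_to_hash c1 c1' \<Longrightarrow>
    split_pat (if c1' \<noteq> c1 then Some PHash else c) c1' (if c1' \<noteq> c1 then Some PHash else c2) \<and>
    weakens c2 (if c1' \<noteq> c1 then Some PHash else c2) \<and> down_to_hash c (if c1' \<noteq> c1 then Some PHash else c)"
  unfolding split_pat_def down_to_hash_def weakens_def by (auto split: option.splits if_splits)

lemma app_split_down_to_hash_env:
  assumes "app_split \<Gamma> \<Gamma>1 \<Gamma>2" and "down_to_hash_env \<Gamma>1 \<Gamma>1'"
  obtains \<Gamma>' \<Gamma>2' where "app_split \<Gamma>' \<Gamma>1' \<Gamma>2'" and "weakens_env \<Gamma>2 \<Gamma>2'" and "down_to_hash_env \<Gamma> \<Gamma>'"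
proof
  let ?\<Gamma>' = "\<lambda>n. if \<Gamma>1' n \<noteq> \<Gamma>1 n then Some PHash else \<Gamma> n"
  let ?\<Gamma>2' = "\<lambda>n. if \<Gamma>1' n \<noteq> \<Gamma>1 n then Some PHash else \<Gamma>2 n"
  show "app_split ?\<Gamma>' \<Gamma>1' ?\<Gamma>2'" "weakens_env \<Gamma>2 ?\<Gamma>2'" "down_to_hash_env \<Gamma> ?\<Gamma>'"
    using assms split_pat_down_to_hash unfolding app_split_iff weakens_env_def down_to_hash_env_def
    by blast+
qed

lemma down_to_hash_env_ext:
  assumes "down_to_hash_env (ext p \<Gamma>) G"
  obtains \<Gamma>' q where "G = ext q \<Gamma>'" and "down_to_hash_env \<Gamma> \<Gamma>'" and "q = p \<or> (p = PDown \<and> q = PHash)"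
proof -
  have "down_to_hash (Some p) (G 0)"
    using assms[unfolded down_to_hash_env_def, rule_format, of 0] by (simp add: ext_def)
  then obtain q where "G 0 = Some q" and "q = p \<or> (p = PDown \<and> q = PHash)"
    by (auto simp: down_to_hash_def)
  moreover have "G = ext q (del_at 0 G)"
    using ins_at_del_at[of 0 G] \<open>G 0 = Some q\<close> by (simp add: ext_eq_ins_at)
  moreover have "down_to_hash_env \<Gamma> (del_at 0 G)"
    using assms by (auto simp: down_to_hash_env_def del_at_def ext_def elim: allE[of _ "Suc n" for n])
  ultimately show ?thesis using that by blast
qed

lemma binds_Down_Hash: "binds C PDown \<Longrightarrow> binds C PHash"
  by (simp add: binds_def)

lemma mi_env_no_Down: "mi_env \<Gamma> \<Delta> \<Longrightarrow> \<forall>n. \<Delta> n \<noteq> Some PDown"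
  unfolding mi_env_iff box_i_pat_def by (auto split: option.splits pat.splits)

lemma mc_env_no_Down: "mc_env \<Gamma> \<Delta> \<Longrightarrow> \<forall>n. \<Delta> n \<noteq> Some PDown"
  unfolding mc_env_iff box_c_pat_def by (auto split: option.splits pat.splits)

lemma subject_reduction:
  assumes "step M N" and "ty \<Gamma> M"
  shows "\<exists>\<Gamma>'. down_to_hash_env \<Gamma> \<Gamma>' \<and> ty \<Gamma>' N"
  using assms
proof (induction arbitrary: \<Gamma> rule: step_induct)
  case (basic M N)
  then show ?case by (rule subject_reduction_basic)
next
  case (AppL M M' N)
  then obtain \<Gamma>1 \<Gamma>2 where split: "app_split \<Gamma> \<Gamma>1 \<Gamma>2" and "ty \<Gamma>1 M" and "ty \<Gamma>2 N"
    by (auto simp: ty_iff elim: ty_i_AppE)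
  from \<open>ty \<Gamma>1 M\<close> obtain \<Gamma>1' where "down_to_hash_env \<Gamma>1 \<Gamma>1'" and "ty \<Gamma>1' M'"
    using AppL.IH by blast
  with split obtain \<Gamma>' \<Gamma>2' where "app_split \<Gamma>' \<Gamma>1' \<Gamma>2'" "weakens_env \<Gamma>2 \<Gamma>2'" "down_to_hash_env \<Gamma> \<Gamma>'"
    by (blast elim: app_split_down_to_hash_env)
  with \<open>ty \<Gamma>1' M'\<close> \<open>ty \<Gamma>2 N\<close> show ?case by (blast intro: ty_App ty_weaken)
next
  case (AppR M N N')
  then obtain \<Gamma>1 \<Gamma>2 where split: "app_split \<Gamma> \<Gamma>2 \<Gamma>1" and "ty \<Gamma>1 M" and "ty \<Gamma>2 N"
    by (auto simp: ty_iff app_split_commute elim: ty_i_AppE)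
  from \<open>ty \<Gamma>2 N\<close> obtain \<Gamma>2' where "down_to_hash_env \<Gamma>2 \<Gamma>2'" and "ty \<Gamma>2' N'"
    using AppR.IH by blast
  with split obtain \<Gamma>' \<Gamma>1' where "app_split \<Gamma>' \<Gamma>2' \<Gamma>1'" "weakens_env \<Gamma>1 \<Gamma>1'" "down_to_hash_env \<Gamma> \<Gamma>'"
    by (blast elim: app_split_down_to_hash_env)
  with \<open>ty \<Gamma>2' N'\<close> \<open>ty \<Gamma>1 M\<close> show ?case by (blast intro: ty_App ty_weaken app_split_commute[THEN iffD1])
next
  case (Lambda C M M')
  then obtain p where "binds C p" and "ty (ext p \<Gamma>) M"
    by (auto simp: ty_iff elim: ty_i_lambdaE)
  then obtain G where "down_to_hash_env (ext p \<Gamma>) G" and "ty G M'"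
    using Lambda.IH by blast
  then obtain \<Gamma>' q where "G = ext q \<Gamma>'" "down_to_hash_env \<Gamma> \<Gamma>'" "q = p \<or> (p = PDown \<and> q = PHash)"
    by (blast elim: down_to_hash_env_ext)
  with \<open>binds C p\<close> \<open>ty G M'\<close> show ?case by (metis binds_Down_Hash ty_lambda)
next
  case (BoxI M M')
  then obtain \<Delta> where "mi_env \<Gamma> \<Delta>" and "ty \<Delta> M"
    by (auto simp: ty_iff elim: ty_i_BoxIE)
  moreover from \<open>ty \<Delta> M\<close> obtain \<Delta>' where "down_to_hash_env \<Delta> \<Delta>'" and "ty \<Delta>' M'"
    using BoxI.IH by blast
  ultimately show ?case
    using down_to_hash_env_no_Down mi_env_no_Down down_to_hash_env_refl by (metis ty_BoxI)
next
  case (BoxC M M')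
  then obtain \<Delta> where "mc_env \<Gamma> \<Delta>" and "ty \<Delta> M"
    by (auto simp: ty_iff elim: ty_i_BoxCE)
  moreover from \<open>ty \<Delta> M\<close> obtain \<Delta>' where "down_to_hash_env \<Delta> \<Delta>'" and "ty \<Delta>' M'"
    using BoxC.IH by blast
  ultimately show ?case
    using down_to_hash_env_no_Down mc_env_no_Down down_to_hash_env_refl by (metis ty_BoxC)
qed

lemma ty_steps:
  assumes "step\<^sup>*\<^sup>* M N" and "ty \<Gamma> M" and "\<forall>n. \<Gamma> n \<noteq> Some PDown"
  shows "ty \<Gamma> N"
  using assms(1)
proof (induction rule: rtranclp_induct)
  case base
  show ?case using assms(2) .
next
  case (step N N')
  then obtain \<Gamma>' where "down_to_hash_env \<Gamma> \<Gamma>'" and "ty \<Gamma>' N'"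
    using subject_reduction by blast
  moreover from this(1) have "\<Gamma>' = \<Gamma>" using assms(3) by (rule down_to_hash_env_no_Down[rotated])
  ultimately show ?case by simp
qed

section \<open>Preservation of typing under infinitary reduction\<close>

lemma ty_i_ired:
  assumes "ired cored M L" and "ty_i ty \<Gamma> M"
  shows "ty_i (\<lambda>\<Gamma> L. (\<exists>M. ty \<Gamma> M \<and> cored M L \<and> (\<forall>n. \<Gamma> n \<noteq> Some PDown)) \<or> ty \<Gamma> L) \<Gamma> L"
  using assms
proof (induction arbitrary: \<Gamma> rule: ired_induct)
  case (Var x)
  then show ?case by (rule ty_i_mono') simp
next
  case (App M N L Q)
  from App.prems obtain \<Gamma>1 \<Gamma>2 where "app_split \<Gamma> \<Gamma>1 \<Gamma>2" "ty_i ty \<Gamma>1 M" "ty_i ty \<Gamma>2 L"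
    by (rule ty_i_AppE)
  then show ?case using App.IH by (blast intro: ty_i.a)
next
  case (Lambda C M N)
  from Lambda.prems Lambda.hyps(1) obtain p where "binds C p" "ty_i ty (ext p \<Gamma>) M"
    by (rule ty_i_lambdaE)
  then show ?case using Lambda.IH by (blast intro: ty_i_lambda)
next
  case (BoxI M N)
  from BoxI.prems obtain \<Delta> where "mi_env \<Gamma> \<Delta>" "ty_i ty \<Delta> M"
    by (rule ty_i_BoxIE)
  then show ?case using BoxI.IH by (blast intro: ty_i.mi)
next
  case (BoxC M N)
  from BoxC.prems obtain \<Delta> where "mc_env \<Gamma> \<Delta>" "ty \<Delta> M"
    by (rule ty_i_BoxCE)
  moreover from this(1) have "\<forall>n. \<Delta> n \<noteq> Some PDown" by (rule mc_env_no_Down)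
  ultimately show ?case using BoxC.hyps by (blast intro: ty_i.mc)
qed

lemma ty_cored:
  assumes "ty \<Gamma> M" and "cored M L" and "\<forall>n. \<Gamma> n \<noteq> Some PDown"
  shows "ty \<Gamma> L"
proof -
  let ?R = "\<lambda>\<Gamma> L. \<exists>M. ty \<Gamma> M \<and> cored M L \<and> (\<forall>n. \<Gamma> n \<noteq> Some PDown)"
  show ?thesis
  proof (rule ty_coinduct[of ?R])
    show "?R \<Gamma> L" using assms by blast
  next
    fix \<Gamma> L
    assume "?R \<Gamma> L"
    then obtain M M' where "ty \<Gamma> M" and "step\<^sup>*\<^sup>* M M'" and "ired cored M' L"
      and "\<forall>n. \<Gamma> n \<noteq> Some PDown"
      by (auto elim: cored.cases)
    then have "ty_i ty \<Gamma> M'" using ty_steps by (simp add: ty_iff)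
    with \<open>ired cored M' L\<close> show "ty_i (\<lambda>\<Gamma> L. ?R \<Gamma> L \<or> ty \<Gamma> L) \<Gamma> L" by (rule ty_i_ired)
  qed
qed

lemma ty_ired:
  assumes "ired cored M L" and "ty \<Gamma> M"
  shows "ty \<Gamma> L"
proof -
  from assms(2) have "ty_i ty \<Gamma> M" by (simp add: ty_iff)
  with assms(1) have "ty_i ty \<Gamma> L"
    by (rule ty_i_ired[THEN ty_i_mono']) (auto intro: ty_cored)
  then show ?thesis by (simp add: ty_iff)
qed

section \<open>The local diagram\<close>

lemma ty_i_Up_not_occurs0: "occurs0 k A \<Longrightarrow> ty_i X \<Gamma> A \<Longrightarrow> \<Gamma> k \<noteq> Some PUp"
proof (induction arbitrary: \<Gamma> rule: occurs0.induct)
  case (1 k)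
  then show ?case by (auto simp: ty_i_Var_iff)
next
  case (2 k M N)
  then obtain \<Gamma>1 \<Gamma>2 where "app_split \<Gamma> \<Gamma>1 \<Gamma>2" and "\<Gamma>1 k \<noteq> Some PUp"
    by (blast elim: ty_i_AppE)
  then show ?case by (metis app_split_iff split_pat_simps(5))
next
  case (3 k N M)
  then obtain \<Gamma>1 \<Gamma>2 where "app_split \<Gamma> \<Gamma>1 \<Gamma>2" and "\<Gamma>2 k \<noteq> Some PUp"
    by (blast elim: ty_i_AppE)
  then show ?case by (metis app_split_iff split_pat_simps(5))
next
  case (4 C k M)
  from \<open>ty_i X \<Gamma> (C M)\<close> \<open>is_lambda C\<close> obtain p where "ty_i X (ext p \<Gamma>) M"
    by (rule ty_i_lambdaE)
  then have "ext p \<Gamma> (Suc k) \<noteq> Some PUp" by (rule "4.IH")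
  then show ?case by (simp add: ext_def)
next
  case (5 k M)
  from \<open>ty_i X \<Gamma> (BoxI M)\<close> obtain \<Delta> where "mi_env \<Gamma> \<Delta>" and "ty_i X \<Delta> M"
    by (rule ty_i_BoxIE)
  then have "\<Delta> k \<noteq> Some PUp" using "5.IH" by blast
  with \<open>mi_env \<Gamma> \<Delta>\<close> show ?case by (auto simp: mi_env_iff box_i_pat_def)
qed

inductive_cases ired_AppE: "ired X (App M N) L"
inductive_cases ired_LamE: "ired X (Lam M) L"
inductive_cases ired_LamIE: "ired X (LamI M) L"
inductive_cases ired_LamCE: "ired X (LamC M) L"
inductive_cases ired_BoxIE: "ired X (BoxI M) L"
inductive_cases ired_BoxCE: "ired X (BoxC M) L"

lemma step0_ired_commute:
  assumes "step0 M N" and "ired cored M L" and "ty_i X \<Gamma> M"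
  shows "\<exists>P. ired cored N P \<and> step0 L P"
  using assms
proof (induction arbitrary: L \<Gamma> rule: step0_induct)
  case (basic M N)
  from basic.hyps show ?case
  proof cases
    case (1 A B)
    with basic.prems(1) obtain A' B' where L: "L = App (Lam A') B'"
      and "ired cored A A'" and "ired cored B B'"
      by (blast elim: ired_AppE ired_LamE)
    then have "ired cored (subst 0 B A) (subst 0 B' A')"
      by (blast intro: ired_subst ired_into_cored)
    moreover have "step0 L (subst 0 B' A')"
      unfolding L by (rule step0.intros(1), rule basic.intros(1))
    ultimately show ?thesis using 1 by blast
  next
    case (2 A B)
    with basic.prems(1) obtain A' B' where L: "L = App (LamI A') (BoxI B')"
      and "ired cored A A'" and "ired cored B B'"
      by (blast elim: ired_AppE ired_LamIE ired_BoxIE)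
    then have "ired cored (subst 0 B A) (subst 0 B' A')"
      by (blast intro: ired_subst ired_into_cored)
    moreover have "step0 L (subst 0 B' A')"
      unfolding L by (rule step0.intros(1), rule basic.intros(2))
    ultimately show ?thesis using 2 by blast
  next
    case (3 A B)
    with basic.prems(1) obtain A' B' where L: "L = App (LamC A') (BoxC B')"
      and "ired cored A A'" and "cored B B'"
      by (blast elim: ired_AppE ired_LamCE ired_BoxCE)
    from basic.prems(2) 3 obtain \<Gamma>1 where "ty_i X (ext PUp \<Gamma>1) A"
      by (blast elim: ty_i_AppE ty_i_LamCE)
    then have "\<not> occurs0 0 A"
      using ty_i_Up_not_occurs0 by (fastforce simp: ext_def)
    with \<open>ired cored A A'\<close> \<open>cored B B'\<close> have "ired cored (subst 0 B A) (subst 0 B' A')"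
      by (blast intro: ired_subst)
    moreover have "step0 L (subst 0 B' A')"
      unfolding L by (rule step0.intros(1), rule basic.intros(3))
    ultimately show ?thesis using 3 by blast
  qed
next
  case (AppL M M' N)
  from AppL.prems obtain L1 L2 \<Gamma>1 where "L = App L1 L2" "ired cored M L1" "ired cored N L2"
    and "ty_i X \<Gamma>1 M"
    by (blast elim: ired_AppE ty_i_AppE)
  with AppL.IH show ?case by (blast intro: ired.intros(2) step0.intros(2))
next
  case (AppR M N N')
  from AppR.prems obtain L1 L2 \<Gamma>2 where "L = App L1 L2" "ired cored M L1" "ired cored N L2"
    and "ty_i X \<Gamma>2 N"
    by (blast elim: ired_AppE ty_i_AppE)
  with AppR.IH show ?case by (blast intro: ired.intros(2) step0.intros(3))
next
  case (Lambda C M M')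
  from Lambda.prems Lambda.hyps(1) obtain L' p where "L = C L'" "ired cored M L'"
    and "ty_i X (ext p \<Gamma>) M"
    by (blast elim: ired_lambdaE ty_i_lambdaE)
  with Lambda.IH obtain P where "ired cored M' P" "step0 L' P" by blast
  with Lambda.hyps(1) \<open>L = C L'\<close> show ?case by (blast intro: ired_lambda step0_lambda)
next
  case (BoxI M M')
  from BoxI.prems obtain L' \<Delta> where "L = BoxI L'" "ired cored M L'" and "ty_i X \<Delta> M"
    by (blast elim: ired_BoxIE ty_i_BoxIE)
  with BoxI.IH show ?case by (blast intro: ired.intros(6) step0.intros(7))
qed

theorem mainTheorem18:
  assumes "is_term M" and "step0 M N" and "ired_rel M L"
  shows "\<exists>P. is_term P \<and> ired_rel N P \<and> step0 L P"
proof -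
  from assms(1) obtain \<Gamma> where "finite (dom \<Gamma>)" and "ty \<Gamma> M"
    unfolding is_term_def by blast
  then obtain P where "ired_rel N P" and "step0 L P"
    using step0_ired_commute[OF assms(2,3)] by (auto simp: ty_iff)
  have "ty \<Gamma> L" using assms(3) \<open>ty \<Gamma> M\<close> by (rule ty_ired)
  then obtain \<Gamma>' where "down_to_hash_env \<Gamma> \<Gamma>'" and "ty \<Gamma>' P"
    using subject_reduction[OF step0_step[OF \<open>step0 L P\<close>]] by blast
  moreover from this(1) have "finite (dom \<Gamma>')"
    using \<open>finite (dom \<Gamma>)\<close> by (simp add: down_to_hash_env_dom)
  ultimately have "is_term P" unfolding is_term_def by blast
  with \<open>ired_rel N P\<close> \<open>step0 L P\<close> show ?thesis by blast
qed

end
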